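(* Consider the following time-allocation model. Task durations $X_1,X_2,\dots$ are i.i.d. copies of a random variable $X$ with values in $[0,C]$, $C>0$, with law unknown to the agent. The reward function $r:[0,C]\to[E,D]$, $E\le 0\le D$, is known to the agent. Idle times $S_1,S_2,\dots$ are i.i.d. exponential with known parameter $\lambda>0$, independent of the durations. At step $n$ the agent waits $S_n$, observes $X_n$, and decides $a_n\in\{0,1\}$; if $a_n=1$ she is busy for time $X_n$ and earns reward $r(X_n)$. Let $\theta=\min\{n:\sum_{i=1}^n(S_i+X_ia_i)>T\}$, let the expected reward of the policy be $U(T)=\mathbb{E}[\sum_{n=1}^\theta r(X_n)a_n]$, and its regret $R(T)=c^*T-U(T)$, where $c^*$ is the unique root on $\mathbb{R}_+$ of $\Phi(c)=\lambda\mathbb{E}[(r(X)-cX)_+]-c$. Consider the policy (Algorithm 1) which, upon receiving the $n$-th proposal $X_n$, computes $c_n$, the unique root on $\mathbb{R}_+$ of $\Phi_n(c)=\lambda\frac1n\sum_{i=1}^n(r(X_i)-cX_i)_+-c$, and accepts the task if and only if $r(X_n)\ge c_nX_n$, until the total elapsed time exceeds $T$. Then its regret satisfies $$R(T)\le \lambda(D-E)C\sqrt{\tfrac{\pi}{2}}\sqrt{\lambda T+1}.$$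
   Context: $(z)_+=\max\{z,0\}$; $\pi$ in the bound denotes the number $3.14159\ldots$. *)

theory Defs
  imports "HOL-Probability.Probability"
begin

definition emp_root :: "real \<Rightarrow> (real \<Rightarrow> real) \<Rightarrow> (nat \<Rightarrow> 'a \<Rightarrow> real) \<Rightarrow> nat \<Rightarrow> 'a \<Rightarrow> real" where
  "emp_root lam r X n \<omega> =
     (THE c. 0 \<le> c \<and> lam * ((1 / real n) * (\<Sum>i=1..n. max (r (X i \<omega>) - c * X i \<omega>) 0)) - c = 0)"

definition alg_action :: "real \<Rightarrow> (real \<Rightarrow> real) \<Rightarrow> (nat \<Rightarrow> 'a \<Rightarrow> real) \<Rightarrow> nat \<Rightarrow> 'a \<Rightarrow> real" where
  "alg_action lam r X n \<omega> = (if r (X n \<omega>) \<ge> emp_root lam r X n \<omega> * X n \<omega> then 1 else 0)"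

definition alg_theta :: "real \<Rightarrow> (real \<Rightarrow> real) \<Rightarrow> (nat \<Rightarrow> 'a \<Rightarrow> real) \<Rightarrow> (nat \<Rightarrow> 'a \<Rightarrow> real) \<Rightarrow> real \<Rightarrow> 'a \<Rightarrow> nat" where
  "alg_theta lam r X S T \<omega> =
     (LEAST n. 1 \<le> n \<and> (\<Sum>i=1..n. S i \<omega> + X i \<omega> * alg_action lam r X i \<omega>) > T)"

definition alg_reward :: "real \<Rightarrow> (real \<Rightarrow> real) \<Rightarrow> (nat \<Rightarrow> 'a \<Rightarrow> real) \<Rightarrow> (nat \<Rightarrow> 'a \<Rightarrow> real) \<Rightarrow> real \<Rightarrow> 'a \<Rightarrow> real" where
  "alg_reward lam r X S T \<omega> =
     (\<Sum>n=1..alg_theta lam r X S T \<omega>. r (X n \<omega>) * alg_action lam r X n \<omega>)"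

definition c_star :: "'a measure \<Rightarrow> real \<Rightarrow> (real \<Rightarrow> real) \<Rightarrow> ('a \<Rightarrow> real) \<Rightarrow> real" where
  "c_star M lam r Y =
     (THE c. 0 \<le> c \<and> lam * (\<integral>\<omega>. max (r (Y \<omega>) - c * Y \<omega>) 0 \<partial>M) - c = 0)"

end

theory Submission
  imports Defs
begin

text \<open>
  Up to the horizon, the regret is at most the sum over the reached steps \<open>n \<le> \<theta>\<close> of
  \<open>c\<^sup>* (S\<^sub>n + X\<^sub>n a\<^sub>n) - r(X\<^sub>n) a\<^sub>n\<close>. Reaching step \<open>n\<close> depends only on the earlier steps, so it is
  independent of \<open>S\<^sub>n\<close> and \<open>X\<^sub>n\<close>; since \<open>E[S\<^sub>n] = 1/\<lambda>\<close> and \<open>c\<^sup>* = \<lambda> \<mu>\<close> with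
  \<open>\<mu> = E[(r(X) - c\<^sup>* X)\<^sub>+]\<close>, the \<open>n\<close>-th term has the same expectation as the surplus lost by
  deciding with \<open>c\<^sub>n\<close> instead of \<open>c\<^sup>*\<close>. That loss is at most \<open>C |c\<^sub>n - c\<^sup>*| \<le> \<lambda> C |\<mu>\<^sub>n - \<mu>|\<close>,
  where \<open>\<mu>\<^sub>n\<close> is the empirical mean of the i.i.d. surpluses \<open>(r(X\<^sub>i) - c\<^sup>* X\<^sub>i)\<^sub>+ \<in> [0, D]\<close>;
  a variance bound gives \<open>E |\<mu>\<^sub>n - \<mu>| \<le> D / (2 \<surd>n)\<close>, and the event that step \<open>n\<close> is
  reached can be enlarged to one that depends on the idle times only. The probabilities
  \<open>p\<^sub>n\<close> of the enlarged events are bounded by Erlang distribution functions, whence \<open>\<Sum> p\<^sub>n \<le> \<lambda> T + 1\<close>,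
  so \<open>\<Sum> p\<^sub>n / \<surd>n \<le> 2 \<surd>(\<lambda> T + 1)\<close>. Altogether the regret is at most
  \<open>\<lambda> C D \<surd>(\<lambda> T + 1)\<close>, which is below the stated bound.
\<close>

section \<open>Roots of the price equations\<close>

lemma antimono_fixpoint_le_iff:
  fixes g :: "real \<Rightarrow> real"
  assumes anti: "antimono_on {0..} g" and c: "0 \<le> c" "g c - c = 0"
  shows "c \<le> t \<longleftrightarrow> 0 \<le> t \<and> g t - t \<le> 0"
proof
  assume "c \<le> t"
  then have "g t \<le> g c" using monotone_onD[OF anti, of c t] c by auto
  with \<open>c \<le> t\<close> c show "0 \<le> t \<and> g t - t \<le> 0" by linarith
next
  assume t: "0 \<le> t \<and> g t - t \<le> 0"
  show "c \<le> t"
  proof (rule ccontr)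
    assume "\<not> c \<le> t"
    then have "g c \<le> g t" using monotone_onD[OF anti, of t c] c t by auto
    with \<open>\<not> c \<le> t\<close> c t show False by linarith
  qed
qed

lemma antimono_fixpoint_ex1:
  fixes g :: "real \<Rightarrow> real"
  assumes anti: "antimono_on {0..} g" and cont: "continuous_on {0..} g" and g0: "0 \<le> g 0"
  shows "\<exists>!c. 0 \<le> c \<and> g c - c = 0"
proof (rule ex_ex1I)
  have "g (g 0) \<le> g 0" using monotone_onD[OF anti, of 0 "g 0"] g0 by auto
  moreover have "continuous_on {0..g 0} (\<lambda>x. g x - x)"
    by (intro continuous_intros continuous_on_subset[OF cont]) auto
  ultimately show "\<exists>c. 0 \<le> c \<and> g c - c = 0"
    using IVT2'[of "\<lambda>x. g x - x" "g 0" 0 0] g0 by force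
next
  fix c d assume "0 \<le> c \<and> g c - c = 0" "0 \<le> d \<and> g d - d = 0"
  then show "c = d" using antimono_fixpoint_le_iff[OF anti] by (metis order.antisym order.refl)
qed

lemma antimono_fixpoint_dist:
  fixes g :: "real \<Rightarrow> real"
  assumes anti: "antimono_on {0..} g" and c: "0 \<le> c" "g c - c = 0" and d: "0 \<le> d"
  shows "\<bar>c - d\<bar> \<le> \<bar>g d - d\<bar>"
proof (cases "d \<le> c")
  case True
  then have "g c \<le> g d" using monotone_onD[OF anti, of d c] d by auto
  with True c show ?thesis by linarith
next
  case False
  then have "g d \<le> g c" using monotone_onD[OF anti, of c d] c by auto
  with False c show ?thesis by linarith
qed

text \<open>The paper's \<open>\<Phi>\<^sub>n(c)\<close> is \<open>lam * emp_surplus r X n \<omega> c - c\<close>.\<close>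

definition emp_surplus :: "(real \<Rightarrow> real) \<Rightarrow> (nat \<Rightarrow> 'a \<Rightarrow> real) \<Rightarrow> nat \<Rightarrow> 'a \<Rightarrow> real \<Rightarrow> real" where
  "emp_surplus r X n \<omega> c = (1 / real n) * (\<Sum>i=1..n. max (r (X i \<omega>) - c * X i \<omega>) 0)"

lemma emp_surplus_cong:
  assumes "\<forall>i\<in>{1..n}. X i \<omega> = X' i \<omega>'"
  shows "emp_surplus r X n \<omega> c = emp_surplus r X' n \<omega>' c"
  unfolding emp_surplus_def using assms by (intro arg_cong[where f="(*) _"] sum.cong) auto

lemma borel_measurable_emp_surplus:
  assumes [measurable]: "r \<in> borel_measurable borel" "\<And>i. i \<in> {1..n} \<Longrightarrow> X i \<in> borel_measurable N"
  shows "(\<lambda>\<omega>. emp_surplus r X n \<omega> c) \<in> borel_measurable N"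
  unfolding emp_surplus_def by (intro borel_measurable_times borel_measurable_const borel_measurable_sum) auto

lemma antimono_emp_surplus:
  assumes "0 \<le> lam" "\<forall>i\<in>{1..n}. 0 \<le> X i \<omega>"
  shows "antimono_on {0..} (\<lambda>c. lam * emp_surplus r X n \<omega> c)"
proof (rule monotone_onI)
  fix c d :: real assume "c \<le> d"
  have "max (r (X i \<omega>) - d * X i \<omega>) 0 \<le> max (r (X i \<omega>) - c * X i \<omega>) 0" if "i \<in> {1..n}" for i
  proof -
    have "c * X i \<omega> \<le> d * X i \<omega>" using assms(2) that \<open>c \<le> d\<close> by (simp add: mult_right_mono)
    then show ?thesis by linarith
  qed
  then have "emp_surplus r X n \<omega> d \<le> emp_surplus r X n \<omega> c"
    unfolding emp_surplus_def by (intro mult_left_mono sum_mono) auto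
  with assms(1) show "lam * emp_surplus r X n \<omega> d \<le> lam * emp_surplus r X n \<omega> c"
    by (rule mult_left_mono[rotated])
qed

lemma emp_root_eq_The:
  "emp_root lam r X n \<omega> = (THE c. 0 \<le> c \<and> lam * emp_surplus r X n \<omega> c - c = 0)"
  unfolding emp_root_def emp_surplus_def ..

lemma emp_root_fixpoint:
  assumes "0 \<le> lam" "\<forall>i\<in>{1..n}. 0 \<le> X i \<omega>"
  shows "0 \<le> emp_root lam r X n \<omega> \<and> lam * emp_surplus r X n \<omega> (emp_root lam r X n \<omega>) - emp_root lam r X n \<omega> = 0"
proof -
  have "continuous_on {0..} (\<lambda>c. lam * emp_surplus r X n \<omega> c)"
    unfolding emp_surplus_def by (intro continuous_intros)
  moreover have "0 \<le> lam * emp_surplus r X n \<omega> 0"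
    unfolding emp_surplus_def using assms(1) by (intro mult_nonneg_nonneg sum_nonneg) auto
  ultimately show ?thesis
    unfolding emp_root_eq_The
    by (rule theI'[OF antimono_fixpoint_ex1[OF antimono_emp_surplus[of lam n X \<omega> r, OF assms]]])
qed

lemma emp_root_le_iff:
  assumes "0 \<le> lam" "\<forall>i\<in>{1..n}. 0 \<le> X i \<omega>"
  shows "emp_root lam r X n \<omega> \<le> t \<longleftrightarrow> 0 \<le> t \<and> lam * emp_surplus r X n \<omega> t - t \<le> 0"
  by (rule antimono_fixpoint_le_iff[OF antimono_emp_surplus[of lam n X \<omega> r, OF assms]])
    (use emp_root_fixpoint[of lam n X \<omega> r, OF assms] in auto)

lemma emp_root_dist:
  assumes "0 \<le> lam" "\<forall>i\<in>{1..n}. 0 \<le> X i \<omega>" "0 \<le> d"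
  shows "\<bar>emp_root lam r X n \<omega> - d\<bar> \<le> \<bar>lam * emp_surplus r X n \<omega> d - d\<bar>"
  by (rule antimono_fixpoint_dist[OF antimono_emp_surplus[of lam n X \<omega> r, OF assms(1,2)]])
    (use emp_root_fixpoint[of lam n X \<omega> r, OF assms(1,2)] assms(3) in auto)

lemma emp_root_cong:
  assumes "\<forall>i\<in>{1..n}. X i \<omega> = X' i \<omega>'"
  shows "emp_root lam r X n \<omega> = emp_root lam r X' n \<omega>'"
  unfolding emp_root_eq_The using emp_surplus_cong[of n X \<omega> X' \<omega>', OF assms] by simp

lemma borel_measurable_emp_root:
  assumes "0 \<le> lam" and [measurable]: "r \<in> borel_measurable borel"
    and [measurable]: "\<And>i. i \<in> {1..n} \<Longrightarrow> X i \<in> borel_measurable N"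
    and nonneg: "\<And>i \<omega>. i \<in> {1..n} \<Longrightarrow> \<omega> \<in> space N \<Longrightarrow> 0 \<le> X i \<omega>"
  shows "emp_root lam r X n \<in> borel_measurable N"
  unfolding borel_measurable_iff_le
proof
  fix t
  have [measurable]: "(\<lambda>\<omega>. emp_surplus r X n \<omega> t) \<in> borel_measurable N"
    using assms(2,3) by (rule borel_measurable_emp_surplus)
  have "emp_root lam r X n \<omega> \<le> t \<longleftrightarrow> 0 \<le> t \<and> lam * emp_surplus r X n \<omega> t - t \<le> 0"
    if "\<omega> \<in> space N" for \<omega>
    by (rule emp_root_le_iff[OF assms(1)]) (use nonneg that in auto)
  then have "{\<omega> \<in> space N. emp_root lam r X n \<omega> \<le> t}
      = {\<omega> \<in> space N. 0 \<le> t \<and> lam * emp_surplus r X n \<omega> t - t \<le> 0}"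
    by auto
  also have "\<dots> \<in> sets N" by measurable
  finally show "{\<omega> \<in> space N. emp_root lam r X n \<omega> \<le> t} \<in> sets N" .
qed

section \<open>Trajectory of the policy\<close>

lemma alg_action_cases: "alg_action lam r X n \<omega> = 0 \<or> alg_action lam r X n \<omega> = 1"
  unfolding alg_action_def by auto

lemma alg_action_cong:
  assumes "\<forall>i\<in>{1..n}. X i \<omega> = X' i \<omega>'" "1 \<le> n"
  shows "alg_action lam r X n \<omega> = alg_action lam r X' n \<omega>'"
  using emp_root_cong[of n X \<omega> X' \<omega>' lam r, OF assms(1)] assms unfolding alg_action_def by auto

lemma borel_measurable_alg_action:
  assumes "0 \<le> lam" and [measurable]: "r \<in> borel_measurable borel"
    and X: "\<And>i. i \<in> {1..n} \<Longrightarrow> X i \<in> borel_measurable N"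
    and nonneg: "\<And>i \<omega>. i \<in> {1..n} \<Longrightarrow> \<omega> \<in> space N \<Longrightarrow> 0 \<le> X i \<omega>"
    and "1 \<le> n"
  shows "alg_action lam r X n \<in> borel_measurable N"
proof -
  have [measurable]: "X n \<in> borel_measurable N" using X \<open>1 \<le> n\<close> by auto
  have [measurable]: "emp_root lam r X n \<in> borel_measurable N"
    using borel_measurable_emp_root[OF assms(1,2) X nonneg] .
  show ?thesis unfolding alg_action_def[abs_def] by measurable
qed

definition elapsed ::
    "real \<Rightarrow> (real \<Rightarrow> real) \<Rightarrow> (nat \<Rightarrow> 'a \<Rightarrow> real) \<Rightarrow> (nat \<Rightarrow> 'a \<Rightarrow> real) \<Rightarrow> nat \<Rightarrow> 'a \<Rightarrow> real"
  where
  "elapsed lam r X S n \<omega> = (\<Sum>i=1..n. S i \<omega> + X i \<omega> * alg_action lam r X i \<omega>)"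

text \<open>\<open>step_reached \<dots> n\<close> is the event \<open>n \<le> \<theta>\<close>; it is determined by the first \<open>n - 1\<close> steps.\<close>

definition step_reached ::
    "real \<Rightarrow> (real \<Rightarrow> real) \<Rightarrow> (nat \<Rightarrow> 'a \<Rightarrow> real) \<Rightarrow> (nat \<Rightarrow> 'a \<Rightarrow> real) \<Rightarrow> real \<Rightarrow> nat \<Rightarrow> 'a \<Rightarrow> bool"
  where
  "step_reached lam r X S T n \<omega> \<longleftrightarrow> (\<forall>j\<in>{1..<n}. elapsed lam r X S j \<omega> \<le> T)"

definition idle_time :: "(nat \<Rightarrow> 'a \<Rightarrow> real) \<Rightarrow> nat \<Rightarrow> 'a \<Rightarrow> real" where
  "idle_time S n \<omega> = (\<Sum>i=1..n. S i \<omega>)"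

text \<open>A superset of \<open>step_reached \<dots> n\<close> that involves the idle times only, hence is independent of
  all durations.\<close>

definition idle_within :: "(nat \<Rightarrow> 'a \<Rightarrow> real) \<Rightarrow> real \<Rightarrow> nat \<Rightarrow> 'a \<Rightarrow> bool" where
  "idle_within S T n \<omega> \<longleftrightarrow> (\<forall>j\<in>{1..<n}. idle_time S j \<omega> \<le> T)"

lemma elapsed_cong:
  assumes "\<forall>i\<in>{1..n}. X i \<omega> = X' i \<omega>' \<and> S i \<omega> = S' i \<omega>'"
  shows "elapsed lam r X S n \<omega> = elapsed lam r X' S' n \<omega>'"
  unfolding elapsed_def
proof (rule sum.cong)
  fix i assume "i \<in> {1..n}"
  moreover have "alg_action lam r X i \<omega> = alg_action lam r X' i \<omega>'"
    using assms \<open>i \<in> {1..n}\<close> by (intro alg_action_cong) auto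
  ultimately show "S i \<omega> + X i \<omega> * alg_action lam r X i \<omega> = S' i \<omega>' + X' i \<omega>' * alg_action lam r X' i \<omega>'"
    using assms by auto
qed simp

lemma step_reached_cong:
  assumes "\<forall>i\<in>{1..<n}. X i \<omega> = X' i \<omega>' \<and> S i \<omega> = S' i \<omega>'"
  shows "step_reached lam r X S T n \<omega> = step_reached lam r X' S' T n \<omega>'"
proof -
  have "\<And>j. j \<in> {1..<n} \<Longrightarrow> elapsed lam r X S j \<omega> = elapsed lam r X' S' j \<omega>'"
    using assms by (intro elapsed_cong) auto
  then show ?thesis unfolding step_reached_def by auto
qed

lemma idle_within_cong:
  assumes "\<forall>i\<in>{1..<n}. S i \<omega> = S' i \<omega>'"
  shows "idle_within S T n \<omega> = idle_within S' T n \<omega>'"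
proof -
  have "\<And>j. j \<in> {1..<n} \<Longrightarrow> idle_time S j \<omega> = idle_time S' j \<omega>'"
    using assms unfolding idle_time_def by (intro sum.cong) auto
  then show ?thesis unfolding idle_within_def by auto
qed

lemma borel_measurable_elapsed:
  assumes "0 \<le> lam" "r \<in> borel_measurable borel"
    and X: "\<And>i. i \<in> {1..n} \<Longrightarrow> X i \<in> borel_measurable N"
    and S: "\<And>i. i \<in> {1..n} \<Longrightarrow> S i \<in> borel_measurable N"
    and nonneg: "\<And>i \<omega>. i \<in> {1..n} \<Longrightarrow> \<omega> \<in> space N \<Longrightarrow> 0 \<le> X i \<omega>"
  shows "elapsed lam r X S n \<in> borel_measurable N"
  unfolding elapsed_def[abs_def]
proof (rule borel_measurable_sum)
  fix i assume i: "i \<in> {1..n}"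
  have [measurable]: "X i \<in> borel_measurable N" "S i \<in> borel_measurable N" using X S i by auto
  have [measurable]: "alg_action lam r X i \<in> borel_measurable N"
    by (rule borel_measurable_alg_action[OF assms(1,2)]) (use X nonneg i in auto)
  show "(\<lambda>\<omega>. S i \<omega> + X i \<omega> * alg_action lam r X i \<omega>) \<in> borel_measurable N" by measurable
qed

lemma measurable_step_reached:
  assumes "0 \<le> lam" "r \<in> borel_measurable borel"
    and X: "\<And>i. i \<in> {1..<n} \<Longrightarrow> X i \<in> borel_measurable N"
    and S: "\<And>i. i \<in> {1..<n} \<Longrightarrow> S i \<in> borel_measurable N"
    and nonneg: "\<And>i \<omega>. i \<in> {1..<n} \<Longrightarrow> \<omega> \<in> space N \<Longrightarrow> 0 \<le> X i \<omega>"
  shows "Measurable.pred N (step_reached lam r X S T n)"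
proof -
  have [measurable]: "\<And>j. j \<in> {1..<n} \<Longrightarrow> elapsed lam r X S j \<in> borel_measurable N"
    by (rule borel_measurable_elapsed[OF assms(1,2)]) (use X S nonneg in auto)
  show ?thesis unfolding step_reached_def[abs_def]
    by (intro pred_intros_finite) (auto intro!: borel_measurable_le)
qed

lemma measurable_idle_within:
  assumes "\<And>i. i \<in> {1..<n} \<Longrightarrow> S i \<in> borel_measurable N"
  shows "Measurable.pred N (idle_within S T n)"
proof -
  have [measurable]: "\<And>j. j \<in> {1..<n} \<Longrightarrow> idle_time S j \<in> borel_measurable N"
    unfolding idle_time_def[abs_def] by (rule borel_measurable_sum) (use assms in auto)
  show ?thesis unfolding idle_within_def[abs_def]
    by (intro pred_intros_finite) (auto intro!: borel_measurable_le)
qed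

lemma idle_time_le_elapsed:
  assumes "\<forall>i\<in>{1..n}. 0 \<le> X i \<omega>"
  shows "idle_time S n \<omega> \<le> elapsed lam r X S n \<omega>"
  unfolding idle_time_def elapsed_def
  using assms by (intro sum_mono) (auto simp: alg_action_def)

lemma step_reached_imp_idle_within:
  assumes "\<forall>i\<in>{1..<n}. 0 \<le> X i \<omega>" "step_reached lam r X S T n \<omega>"
  shows "idle_within S T n \<omega>"
  using assms idle_time_le_elapsed[of _ X \<omega> S lam r] unfolding step_reached_def idle_within_def
  by (meson atLeastAtMost_iff atLeastLessThan_iff order.trans le_less_trans)

lemma alg_theta_eq: "alg_theta lam r X S T \<omega> = (LEAST n. 1 \<le> n \<and> T < elapsed lam r X S n \<omega>)"
  unfolding alg_theta_def elapsed_def ..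

lemma
  assumes "\<exists>n\<ge>1. T < elapsed lam r X S n \<omega>"
  shows elapsed_alg_theta_gt: "T < elapsed lam r X S (alg_theta lam r X S T \<omega>) \<omega>"
    and step_reached_iff_le_alg_theta:
      "1 \<le> n \<and> step_reached lam r X S T n \<omega> \<longleftrightarrow> n \<in> {1..alg_theta lam r X S T \<omega>}"
proof -
  let ?P = "\<lambda>n. 1 \<le> n \<and> T < elapsed lam r X S n \<omega>"
  let ?\<theta> = "alg_theta lam r X S T \<omega>"
  have P\<theta>: "?P ?\<theta>" unfolding alg_theta_eq by (rule LeastI_ex) (use assms in auto)
  then show "T < elapsed lam r X S ?\<theta> \<omega>" by simp
  have before: "\<not> ?P j" if "j < ?\<theta>" for j using not_less_Least[OF that[unfolded alg_theta_eq]] .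
  show "1 \<le> n \<and> step_reached lam r X S T n \<omega> \<longleftrightarrow> n \<in> {1..?\<theta>}"
    unfolding step_reached_def using P\<theta> before by (force simp: not_less)
qed

section \<open>Erlang and inverse square root series\<close>

lemma has_real_derivative_exp_minus_times_exp_taylor:
  "((\<lambda>x. exp (- x) * (\<Sum>j\<le>k. x ^ j / fact j)) has_real_derivative - exp (- x) * x ^ k / fact k) (at x)"
proof (induction k)
  case 0
  show ?case by (auto intro!: derivative_eq_intros)
next
  case (Suc k)
  have "((\<lambda>x. exp (- x) * (x ^ Suc k / fact (Suc k))) has_real_derivative
      exp (- x) * x ^ k / fact k - exp (- x) * x ^ Suc k / fact (Suc k)) (at x)"
    by (rule derivative_eq_intros refl | simp add: fact_Suc field_simps del: of_nat_Suc)+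
  from DERIV_add[OF Suc.IH this] show ?case by (simp add: distrib_left)
qed

lemma sum_exp_taylor_le_exp:
  fixes x :: real
  assumes "0 \<le> x"
  shows "(\<Sum>k<N. x ^ k / fact k) \<le> exp x"
proof -
  have "(\<lambda>k. x ^ k / fact k) sums exp x"
    using exp_converges[of x] by (simp add: divide_inverse_commute)
  moreover from this have "(\<Sum>k<N. x ^ k / fact k) \<le> (\<Sum>k. x ^ k / fact k)"
    using assms by (intro sum_le_suminf) (auto simp: sums_iff)
  ultimately show ?thesis by (simp add: sums_iff)
qed

text \<open>Probabilistically, \<open>\<Sum>\<^sub>k erlang_CDF k l t\<close> is the expected number of arrivals of a
  Poisson process of rate \<open>l\<close> up to time \<open>t\<close>.\<close>

lemma sum_erlang_CDF_le:
  assumes "0 < l" "0 \<le> t"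
  shows "(\<Sum>k<N. erlang_CDF k l t) \<le> l * t"
proof -
  define x where "x = l * t"
  have x: "0 \<le> x" using assms by (simp add: x_def)
  define G where "G k y = exp (- y) * (\<Sum>j\<le>k. y ^ j / fact j)" for k and y :: real
  define H where "H y = y - (\<Sum>k<N. 1 - G k y)" for y
  have "(H has_real_derivative 1 - exp (- y) * (\<Sum>k<N. y ^ k / fact k)) (at y)" for y
  proof -
    have "(H has_real_derivative 1 - (\<Sum>k<N. 0 - (- exp (- y) * y ^ k / fact k))) (at y)"
      unfolding H_def G_def
      by (intro DERIV_diff DERIV_ident DERIV_sum DERIV_const has_real_derivative_exp_minus_times_exp_taylor)
    then show ?thesis by (simp add: sum_distrib_left)
  qed
  moreover have "0 \<le> 1 - exp (- y) * (\<Sum>k<N. y ^ k / fact k)" if "y \<in> {0..x}" for y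
  proof -
    have "exp (- y) * (\<Sum>k<N. y ^ k / fact k) \<le> exp (- y) * exp y"
      using that by (intro mult_left_mono sum_exp_taylor_le_exp) auto
    then show ?thesis by (simp add: exp_minus)
  qed
  ultimately have "H 0 \<le> H x" by (rule deriv_nonneg_imp_mono[OF _ _ x])
  moreover have "G k 0 = 1" for k unfolding G_def by (induction k) auto
  ultimately have "(\<Sum>k<N. 1 - G k x) \<le> x" unfolding H_def by simp
  moreover have "erlang_CDF k 1 x = 1 - G k x" for k
    using x unfolding erlang_CDF_def G_def by (simp add: sum_distrib_left field_simps)
  ultimately show ?thesis using erlang_CDF_transform[OF assms(1)] by (simp add: x_def)
qed

lemma summable_erlang_CDF:
  assumes "0 < l" "0 \<le> t"
  shows "summable (\<lambda>k. erlang_CDF k l t)"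
  using sum_erlang_CDF_le[OF assms] assms(1) by (intro summableI_nonneg_bounded) auto

lemma sum_inverse_sqrt_le: "(\<Sum>m<K. 1 / sqrt (real m + 1)) \<le> 2 * sqrt (real K)"
proof (induction K)
  case 0
  then show ?case by simp
next
  case (Suc K)
  define a where "a = sqrt (real K + 1)"
  define b where "b = sqrt (real K)"
  have "a * a - b * b = 1" "b \<le> a" "0 < a" unfolding a_def b_def by auto
  then have "1 = (a - b) * (a + b)" by (simp add: algebra_simps)
  also have "\<dots> \<le> (a - b) * (2 * a)" using \<open>b \<le> a\<close> by (intro mult_left_mono) auto
  finally have "1 / a \<le> 2 * (a - b)" using \<open>0 < a\<close> by (simp add: field_simps)
  with Suc.IH show ?case unfolding a_def b_def by (simp add: add.commute)
qed

lemma sum_inverse_sqrt_interpolated_le: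
  assumes K: "real K \<le> s" "s \<le> real K + 1"
  shows "(\<Sum>m<K. 1 / sqrt (real m + 1)) + (s - real K) * (1 / sqrt (real K + 1)) \<le> 2 * sqrt s"
proof -
  define a where "a = sqrt (real K + 1)"
  define b where "b = sqrt (real K)"
  define c where "c = sqrt s"
  have "0 < a" "b \<le> c" "c \<le> a" "0 \<le> b" unfolding a_def b_def c_def using K by auto
  have "s - real K = (c - b) * (c + b)"
    unfolding b_def c_def using K by (simp add: algebra_simps)
  also have "\<dots> \<le> (c - b) * (2 * a)"
    using \<open>b \<le> c\<close> \<open>c \<le> a\<close> \<open>0 \<le> b\<close> by (intro mult_left_mono) auto
  finally have "(s - real K) * (1 / a) \<le> 2 * c - 2 * b" using \<open>0 < a\<close> by (simp add: field_simps)
  with sum_inverse_sqrt_le[of K] show ?thesis unfolding a_def b_def c_def by linarith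
qed

text \<open>Bathtub principle: under a mass constraint, a decreasing weight is maximised by
  putting all mass as early as possible.\<close>

lemma sum_mult_antimono_le:
  fixes p w :: "nat \<Rightarrow> real"
  assumes p: "\<And>m. 0 \<le> p m \<and> p m \<le> 1" and mass: "\<And>N. (\<Sum>m<N. p m) \<le> s"
    and w: "antimono w" "\<And>m. 0 \<le> w m"
  shows "(\<Sum>m<N. p m * w m) \<le> (\<Sum>m<K. w m) + (s - real K) * w K"
proof -
  define M where "M = max N K"
  have "(\<Sum>m<N. p m * w m) \<le> (\<Sum>m<M. p m * w m)"
    using p w by (intro sum_mono2) (auto simp: M_def)
  also have "\<dots> \<le> (\<Sum>m<M. (if m < K then w m else 0) + (p m - (if m < K then 1 else 0)) * w K)"
  proof (rule sum_mono)
    fix m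
    have "(p m - 1) * w m \<le> (p m - 1) * w K" if "m < K"
      using p[of m] antimonoD[OF w(1), of m K] that by (intro mult_left_mono_neg) auto
    moreover have "p m * w m \<le> p m * w K" if "\<not> m < K"
      using p[of m] antimonoD[OF w(1), of K m] that by (intro mult_left_mono) auto
    ultimately show "p m * w m \<le> (if m < K then w m else 0) + (p m - (if m < K then 1 else 0)) * w K"
      by (auto simp: algebra_simps)
  qed
  also have "\<dots> = (\<Sum>m<K. w m) + ((\<Sum>m<M. p m) - real K) * w K"
  proof -
    have "{..<M} \<inter> {m. m < K} = {..<K}" by (auto simp: M_def)
    then have "(\<Sum>m<M. if m < K then w m else 0) = (\<Sum>m<K. w m)"
      "(\<Sum>m<M. if m < K then 1 else 0 :: real) = real K"
      by (simp_all add: sum.If_cases)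
    then show ?thesis by (simp add: sum.distrib sum_subtractf flip: sum_distrib_right)
  qed
  also have "\<dots> \<le> (\<Sum>m<K. w m) + (s - real K) * w K"
    using mass[of M] w(2)[of K] by (simp add: mult_right_mono)
  finally show ?thesis .
qed

lemma
  fixes p :: "nat \<Rightarrow> real"
  assumes p: "\<And>m. 0 \<le> p m \<and> p m \<le> 1" and mass: "\<And>N. (\<Sum>m<N. p m) \<le> s" and "0 \<le> s"
  shows summable_divide_sqrt: "summable (\<lambda>m. p m / sqrt (real m + 1))"
    and suminf_divide_sqrt_le: "(\<Sum>m. p m / sqrt (real m + 1)) \<le> 2 * sqrt s"
proof -
  define K where "K = nat \<lfloor>s\<rfloor>"
  have K: "real K \<le> s" "s \<le> real K + 1" unfolding K_def using \<open>0 \<le> s\<close> by linarith+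
  have "antimono (\<lambda>m. 1 / sqrt (real m + 1))" by (intro antimonoI) (simp add: frac_le)
  from sum_mult_antimono_le[OF p mass this, where K=K]
  have partial: "(\<Sum>m<N. p m / sqrt (real m + 1)) \<le> 2 * sqrt s" for N
    using sum_inverse_sqrt_interpolated_le[OF K] by (simp del: sum.lessThan_Suc) (meson order_trans)
  have "0 \<le> p m / sqrt (real m + 1)" for m using p[of m] by simp
  from summableI_nonneg_bounded[OF this partial]
  show "summable (\<lambda>m. p m / sqrt (real m + 1))" .
  from suminf_le_const[OF this partial]
  show "(\<Sum>m. p m / sqrt (real m + 1)) \<le> 2 * sqrt s" .
qed

section \<open>Deviation of sample means\<close>

lemma (in finite_measure) integrable_real_bounded:
  fixes f :: "'a \<Rightarrow> real"
  assumes "f \<in> borel_measurable M" "\<And>x. x \<in> space M \<Longrightarrow> \<bar>f x\<bar> \<le> B"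
  shows "integrable M f"
  using assms by (intro integrable_const_bound[where B=B]) auto

lemma (in prob_space) expectation_of_bool:
  assumes "Measurable.pred M P"
  shows "expectation (\<lambda>x. of_bool (P x)) = prob {x \<in> space M. P x}"
proof -
  have "expectation (\<lambda>x. of_bool (P x)) = expectation (indicator {x \<in> space M. P x})"
    by (rule Bochner_Integration.integral_cong) (auto simp: indicator_def)
  also have "\<dots> = prob ({x \<in> space M. P x} \<inter> space M)" by (rule Bochner_Integration.integral_indicator)
  finally show ?thesis by (simp add: Int_absorb2)
qed

lemma (in prob_space) integrable_of_bool:
  "Measurable.pred M P \<Longrightarrow> integrable M (\<lambda>x. of_bool (P x) :: real)"
  by (rule integrable_real_bounded[where B=1]) auto

lemma (in prob_space) square_expectation_abs_le:
  fixes W :: "'a \<Rightarrow> real"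
  assumes [measurable]: "random_variable borel W" and bounded: "\<And>x. x \<in> space M \<Longrightarrow> \<bar>W x\<bar> \<le> B"
  shows "(expectation (\<lambda>x. \<bar>W x\<bar>))\<^sup>2 \<le> expectation (\<lambda>x. (W x)\<^sup>2)"
proof -
  have "integrable M (\<lambda>x. \<bar>W x\<bar>)"
    using bounded by (intro integrable_real_bounded[where B=B]) auto
  moreover have "integrable M (\<lambda>x. \<bar>W x\<bar>\<^sup>2)"
  proof (rule integrable_real_bounded[where B="B\<^sup>2"])
    fix x assume "x \<in> space M"
    then show "\<bar>\<bar>W x\<bar>\<^sup>2\<bar> \<le> B\<^sup>2" using bounded[of x] power_mono[of "\<bar>W x\<bar>" B 2] by simp
  qed simp
  ultimately show ?thesis using variance_eq[of "\<lambda>x. \<bar>W x\<bar>"] variance_positive[of "\<lambda>x. \<bar>W x\<bar>"] by simp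
qed

lemma (in prob_space) variance_le_Popoviciu:
  fixes Y :: "'a \<Rightarrow> real"
  assumes [measurable]: "random_variable borel Y" and range: "\<And>x. x \<in> space M \<Longrightarrow> 0 \<le> Y x \<and> Y x \<le> D"
  shows "expectation (\<lambda>x. (Y x - expectation Y)\<^sup>2) \<le> D\<^sup>2 / 4"
proof -
  define \<mu> where "\<mu> = expectation Y"
  have Y: "integrable M Y" using range by (intro integrable_real_bounded[where B=D]) auto
  have "expectation (\<lambda>x. (Y x - \<mu>)\<^sup>2) \<le> expectation (\<lambda>x. (D - 2 * \<mu>) * Y x + \<mu>\<^sup>2)"
  proof (rule integral_mono)
    have "integrable M (\<lambda>x. Y x * Y x)"
    proof (rule integrable_real_bounded[where B="D * D"])
      fix x assume "x \<in> space M"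
      with range[of x] show "\<bar>Y x * Y x\<bar> \<le> D * D" by (simp add: abs_mult mult_mono)
    qed simp
    with Y show "integrable M (\<lambda>x. (Y x - \<mu>)\<^sup>2)"
      unfolding power2_diff by (simp add: power2_eq_square)
    fix x assume "x \<in> space M"
    then have "Y x * Y x \<le> D * Y x" using range[of x] by (simp add: mult_right_mono)
    then show "(Y x - \<mu>)\<^sup>2 \<le> (D - 2 * \<mu>) * Y x + \<mu>\<^sup>2" by (simp add: power2_eq_square algebra_simps)
  qed (use Y in simp)
  also have "\<dots> = D\<^sup>2 / 4 - (D / 2 - \<mu>)\<^sup>2" using Y by (simp add: \<mu>_def prob_space power2_eq_square field_simps)
  finally show ?thesis unfolding \<mu>_def using zero_le_power2[of "D / 2 - expectation Y"] by linarith
qed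

lemma (in prob_space) indep_vars_reindex:
  assumes "indep_vars M' X I" "inj_on h J" "h ` J \<subseteq> I"
  shows "indep_vars (\<lambda>j. M' (h j)) (\<lambda>j. X (h j)) J"
proof -
  have "indep_vars (\<lambda>j. PiM {h j} M') (\<lambda>j \<omega>. restrict (\<lambda>i. X i \<omega>) {h j}) J"
    using assms by (intro indep_vars_restrict) (auto simp: disjoint_family_on_def inj_on_eq_iff)
  then have "indep_vars (\<lambda>j. M' (h j)) (\<lambda>j \<omega>. restrict (\<lambda>i. X i \<omega>) {h j} (h j)) J"
    by (rule indep_vars_compose2) (rule measurable_component_singleton, simp)
  then show ?thesis by (rule indep_vars_cong[THEN iffD1, rotated -1]) auto
qed

lemma (in prob_space) expectation_centered_product_indep:
  fixes Y :: "'i \<Rightarrow> 'a \<Rightarrow> real"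
  assumes indep: "indep_vars (\<lambda>_. borel) Y I" and "i \<in> I" "j \<in> I" "i \<noteq> j"
    and "integrable M (Y i)" "integrable M (Y j)"
  shows "expectation (\<lambda>x. (Y i x - expectation (Y i)) * (Y j x - expectation (Y j))) = 0"
proof -
  have "indep_vars (\<lambda>_. borel) Y (insert i {j})"
    using indep by (rule indep_vars_subset) (use assms in auto)
  from indep_vars_sum[OF _ _ this] have "indep_var borel (Y i) borel (Y j)"
    using \<open>i \<noteq> j\<close> by simp
  from indep_var_compose[OF this, of "\<lambda>y. y - expectation (Y i)" borel "\<lambda>y. y - expectation (Y j)" borel]
  have "indep_var borel (\<lambda>x. Y i x - expectation (Y i)) borel (\<lambda>x. Y j x - expectation (Y j))"
    by (simp add: comp_def)
  then show ?thesis using assms(5,6) by (subst indep_var_lebesgue_integral) (auto simp: prob_space)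
qed

lemma (in prob_space) expectation_sample_mean_dev_squared_le:
  fixes Y :: "'i \<Rightarrow> 'a \<Rightarrow> real"
  assumes I: "finite I" "I \<noteq> {}" and indep: "indep_vars (\<lambda>_. borel) Y I"
    and range: "\<And>i x. i \<in> I \<Longrightarrow> x \<in> space M \<Longrightarrow> 0 \<le> Y i x \<and> Y i x \<le> D"
    and mean: "\<And>i. i \<in> I \<Longrightarrow> expectation (Y i) = \<mu>"
  shows "expectation (\<lambda>x. ((1 / card I) * (\<Sum>i\<in>I. Y i x) - \<mu>)\<^sup>2) \<le> D\<^sup>2 / (4 * card I)"
proof -
  define n where "n = real (card I)"
  have "0 < n" using I by (simp add: n_def card_gt_0_iff)
  have [measurable]: "random_variable borel (Y i)" if "i \<in> I" for i
    using indep that by (simp add: indep_vars_def)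
  have Y_int: "integrable M (Y i)" if "i \<in> I" for i
    using range that by (intro integrable_real_bounded[where B=D]) auto
  define Z where "Z i x = Y i x - \<mu>" for i x
  have ZZ_int: "integrable M (\<lambda>x. Z i x * Z j x)" if "i \<in> I" "j \<in> I" for i j
    using Y_int that unfolding Z_def
    by (intro integrable_real_bounded[where B="(D + \<bar>\<mu>\<bar>) * (D + \<bar>\<mu>\<bar>)"])
      (auto simp: abs_mult abs_le_iff intro!: mult_mono dest!: range)
  have "(1 / n) * (\<Sum>i\<in>I. Y i x) - \<mu> = (1 / n) * (\<Sum>i\<in>I. Z i x)" for x
    using \<open>0 < n\<close> by (simp add: Z_def sum_subtractf n_def field_simps)
  then have "expectation (\<lambda>x. ((1 / n) * (\<Sum>i\<in>I. Y i x) - \<mu>)\<^sup>2)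
      = (1 / n)\<^sup>2 * (\<Sum>i\<in>I. \<Sum>j\<in>I. expectation (\<lambda>x. Z i x * Z j x))"
    using ZZ_int by (simp add: power_mult_distrib power2_eq_square sum_product Bochner_Integration.integral_sum
        Bochner_Integration.integrable_sum)
  also have "(\<Sum>i\<in>I. \<Sum>j\<in>I. expectation (\<lambda>x. Z i x * Z j x)) = (\<Sum>i\<in>I. expectation (\<lambda>x. (Z i x)\<^sup>2))"
  proof (rule sum.cong[OF refl])
    fix i assume "i \<in> I"
    have "expectation (\<lambda>x. Z i x * Z j x) = 0" if "j \<in> I - {i}" for j
      using expectation_centered_product_indep[OF indep \<open>i \<in> I\<close>, of j] that Y_int \<open>i \<in> I\<close> mean
      by (simp add: Z_def) (metis eq_commute)
    then show "(\<Sum>j\<in>I. expectation (\<lambda>x. Z i x * Z j x)) = expectation (\<lambda>x. (Z i x)\<^sup>2)"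
      using I \<open>i \<in> I\<close> by (simp add: sum.remove power2_eq_square)
  qed
  also have "\<dots> \<le> (\<Sum>i\<in>I. D\<^sup>2 / 4)"
  proof (rule sum_mono)
    fix i assume "i \<in> I"
    from variance_le_Popoviciu[of "Y i" D] range[OF this] mean[OF this] this
    show "expectation (\<lambda>x. (Z i x)\<^sup>2) \<le> D\<^sup>2 / 4" by (simp add: Z_def)
  qed
  also have "(1 / n)\<^sup>2 * (\<Sum>i\<in>I. D\<^sup>2 / 4) = D\<^sup>2 / (4 * n)"
    using \<open>0 < n\<close> by (simp add: n_def power2_eq_square)
  finally show ?thesis using \<open>0 < n\<close> by (simp add: mult_left_mono n_def)
qed

lemma (in prob_space) expectation_abs_sample_mean_dev_le:
  fixes Y :: "'i \<Rightarrow> 'a \<Rightarrow> real"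
  assumes I: "finite I" "I \<noteq> {}" and indep: "indep_vars (\<lambda>_. borel) Y I"
    and range: "\<And>i x. i \<in> I \<Longrightarrow> x \<in> space M \<Longrightarrow> 0 \<le> Y i x \<and> Y i x \<le> D"
    and mean: "\<And>i. i \<in> I \<Longrightarrow> expectation (Y i) = \<mu>"
  shows "expectation (\<lambda>x. \<bar>(1 / card I) * (\<Sum>i\<in>I. Y i x) - \<mu>\<bar>) \<le> D / (2 * sqrt (card I))"
proof -
  define n where "n = real (card I)"
  have "0 < n" using I by (simp add: n_def card_gt_0_iff)
  have [measurable]: "random_variable borel (Y i)" if "i \<in> I" for i
    using indep that by (simp add: indep_vars_def)
  have "\<bar>(1 / n) * (\<Sum>i\<in>I. Y i x) - \<mu>\<bar> \<le> D + \<bar>\<mu>\<bar>" if "x \<in> space M" for x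
  proof -
    have "0 \<le> (\<Sum>i\<in>I. Y i x)" "(\<Sum>i\<in>I. Y i x) \<le> n * D"
      using range that sum_mono[of I "\<lambda>i. Y i x" "\<lambda>_. D"] by (auto simp: n_def intro: sum_nonneg)
    then have "0 \<le> (1 / n) * (\<Sum>i\<in>I. Y i x)" "(1 / n) * (\<Sum>i\<in>I. Y i x) \<le> D"
      using \<open>0 < n\<close> by (simp_all add: pos_divide_le_eq mult.commute)
    then show ?thesis
      using abs_ge_self[of \<mu>] abs_ge_minus_self[of \<mu>] unfolding abs_le_iff by linarith
  qed
  then have "(expectation (\<lambda>x. \<bar>(1 / n) * (\<Sum>i\<in>I. Y i x) - \<mu>\<bar>))\<^sup>2
      \<le> expectation (\<lambda>x. ((1 / n) * (\<Sum>i\<in>I. Y i x) - \<mu>)\<^sup>2)"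
    by (intro square_expectation_abs_le) auto
  also have "\<dots> \<le> (D / (2 * sqrt n))\<^sup>2"
    using expectation_sample_mean_dev_squared_le[OF assms] \<open>0 < n\<close> by (simp add: n_def power_divide)
  finally have "expectation (\<lambda>x. \<bar>(1 / n) * (\<Sum>i\<in>I. Y i x) - \<mu>\<bar>) \<le> D / (2 * sqrt n)"
    by (rule power2_le_imp_le) (use range I not_empty \<open>0 < n\<close> in \<open>fastforce intro: order.trans\<close>)
  then show ?thesis unfolding n_def .
qed

section \<open>The time-allocation model\<close>

text \<open>Durations are clipped at \<open>0\<close> so that \<open>emp_root\<close> is measurable on the whole product space;
  on the actual sample paths the clipping does nothing.\<close>

definition coord_X :: "nat \<Rightarrow> (nat + nat \<Rightarrow> real) \<Rightarrow> real" where
  "coord_X k v = max 0 (v (Inl k))"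

definition coord_S :: "nat \<Rightarrow> (nat + nat \<Rightarrow> real) \<Rightarrow> real" where
  "coord_S k v = v (Inr k)"

lemma measurable_coord_X[measurable]: "Inl k \<in> A \<Longrightarrow> coord_X k \<in> borel_measurable (PiM A (\<lambda>_. borel))"
  unfolding coord_X_def[abs_def] by measurable

lemma measurable_coord_S[measurable]: "Inr k \<in> A \<Longrightarrow> coord_S k \<in> borel_measurable (PiM A (\<lambda>_. borel))"
  unfolding coord_S_def[abs_def] by measurable

lemma measurable_step_reached_coords:
  assumes "0 \<le> lam" "r \<in> borel_measurable borel" "Inl ` {1..<n} \<union> Inr ` {1..<n} \<subseteq> A"
  shows "Measurable.pred (PiM A (\<lambda>_. borel)) (step_reached lam r coord_X coord_S T n)"
proof (rule measurable_step_reached[OF assms(1,2)])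
  fix i assume "i \<in> {1..<n}"
  with assms(3) have "Inl i \<in> A" "Inr i \<in> A" by auto
  then show "coord_X i \<in> borel_measurable (PiM A (\<lambda>_. borel))" "coord_S i \<in> borel_measurable (PiM A (\<lambda>_. borel))"
    by (simp_all add: measurable_coord_X measurable_coord_S)
qed (simp add: coord_X_def)

lemma measurable_idle_within_coords:
  assumes "Inr ` {1..<n} \<subseteq> A"
  shows "Measurable.pred (PiM A (\<lambda>_. borel)) (idle_within coord_S T n)"
  by (rule measurable_idle_within, rule measurable_coord_S) (use assms in auto)

locale time_allocation = prob_space M for M :: "'a measure" +
  fixes X S :: "nat \<Rightarrow> 'a \<Rightarrow> real" and r :: "real \<Rightarrow> real" and C E D lam T :: real
  assumes C_pos: "C > 0" and E_nonpos: "E \<le> 0" and D_nonneg: "0 \<le> D"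
    and lam_pos: "lam > 0" and T_pos: "T > 0"
    and r_measurable: "r \<in> borel_measurable borel"
    and r_range: "\<forall>x\<in>{0..C}. E \<le> r x \<and> r x \<le> D"
    and X_range: "\<forall>n\<ge>1. \<forall>\<omega>\<in>space M. 0 \<le> X n \<omega> \<and> X n \<omega> \<le> C"
    and indep: "indep_vars (\<lambda>_. borel) (\<lambda>i. case i of Inl n \<Rightarrow> X n | Inr n \<Rightarrow> S n) (Inl ` {1..} \<union> Inr ` {1..})"
    and X_distr: "\<forall>n\<ge>1. distr M borel (X n) = distr M borel (X 1)"
    and S_exponential: "\<forall>n\<ge>1. distributed M lborel (S n) (exponential_density lam)"
begin

declare r_measurable[measurable]

abbreviation reached :: "nat \<Rightarrow> 'a \<Rightarrow> bool" where
  "reached \<equiv> step_reached lam r X S T"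

abbreviation act :: "nat \<Rightarrow> 'a \<Rightarrow> real" where
  "act \<equiv> alg_action lam r X"

abbreviation Z :: "nat + nat \<Rightarrow> 'a \<Rightarrow> real" where
  "Z \<equiv> \<lambda>i. case i of Inl n \<Rightarrow> X n | Inr n \<Rightarrow> S n"

abbreviation indices :: "(nat + nat) set" where
  "indices \<equiv> Inl ` {1..} \<union> Inr ` {1..}"

definition coords :: "(nat + nat) set \<Rightarrow> 'a \<Rightarrow> nat + nat \<Rightarrow> real" where
  "coords A \<omega> = restrict (\<lambda>i. Z i \<omega>) A"

lemma measurable_Z: "i \<in> indices \<Longrightarrow> Z i \<in> borel_measurable M"
  using indep unfolding indep_vars_def by blast

lemma measurable_X[measurable]: "1 \<le> n \<Longrightarrow> X n \<in> borel_measurable M"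
  using measurable_Z[of "Inl n"] by auto

lemma measurable_S[measurable]: "1 \<le> n \<Longrightarrow> S n \<in> borel_measurable M"
  using measurable_Z[of "Inr n"] by auto

lemma X_nonneg: "1 \<le> n \<Longrightarrow> \<omega> \<in> space M \<Longrightarrow> 0 \<le> X n \<omega>"
  and X_le_C: "1 \<le> n \<Longrightarrow> \<omega> \<in> space M \<Longrightarrow> X n \<omega> \<le> C"
  using X_range by auto

lemma r_X_range: "1 \<le> n \<Longrightarrow> \<omega> \<in> space M \<Longrightarrow> E \<le> r (X n \<omega>) \<and> r (X n \<omega>) \<le> D"
  using r_range X_nonneg X_le_C by auto

lemma coord_X_coords: "Inl k \<in> A \<Longrightarrow> 1 \<le> k \<Longrightarrow> \<omega> \<in> space M \<Longrightarrow> coord_X k (coords A \<omega>) = X k \<omega>"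
  unfolding coord_X_def coords_def using X_nonneg by auto

lemma coord_S_coords: "Inr k \<in> A \<Longrightarrow> coord_S k (coords A \<omega>) = S k \<omega>"
  unfolding coord_S_def coords_def by auto

lemma step_reached_coords:
  assumes "Inl ` {1..<n} \<union> Inr ` {1..<n} \<subseteq> A" "\<omega> \<in> space M"
  shows "step_reached lam r coord_X coord_S T n (coords A \<omega>) = step_reached lam r X S T n \<omega>"
  by (rule step_reached_cong) (use assms in \<open>auto simp: coord_X_coords coord_S_coords\<close>)

lemma idle_within_coords:
  assumes "Inr ` {1..<n} \<subseteq> A"
  shows "idle_within coord_S T n (coords A \<omega>) = idle_within S T n \<omega>"
  by (rule idle_within_cong) (use assms in \<open>auto simp: coord_S_coords\<close>)

lemma
  fixes f g :: "(nat + nat \<Rightarrow> real) \<Rightarrow> real" and F G :: "'a \<Rightarrow> real"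
  assumes AB: "A \<subseteq> indices" "B \<subseteq> indices" "A \<inter> B = {}"
    and f: "f \<in> borel_measurable (PiM A (\<lambda>_. borel))" and g: "g \<in> borel_measurable (PiM B (\<lambda>_. borel))"
    and F: "\<And>\<omega>. \<omega> \<in> space M \<Longrightarrow> F \<omega> = f (coords A \<omega>)"
    and G: "\<And>\<omega>. \<omega> \<in> space M \<Longrightarrow> G \<omega> = g (coords B \<omega>)"
    and "integrable M F" "integrable M G"
  shows expectation_mult_coords: "expectation (\<lambda>\<omega>. F \<omega> * G \<omega>) = expectation F * expectation G"
    and integrable_mult_coords: "integrable M (\<lambda>\<omega>. F \<omega> * G \<omega>)"
proof -
  have "indep_var (PiM A (\<lambda>_. borel)) (coords A) (PiM B (\<lambda>_. borel)) (coords B)"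
    unfolding coords_def[abs_def] using indep_var_restrict[OF indep AB(3,1,2)] .
  from indep_var_compose[OF this f g]
  have indep_fg: "indep_var borel (\<lambda>\<omega>. f (coords A \<omega>)) borel (\<lambda>\<omega>. g (coords B \<omega>))"
    by (simp add: comp_def)
  have "integrable M (\<lambda>\<omega>. f (coords A \<omega>))" "integrable M (\<lambda>\<omega>. g (coords B \<omega>))"
    using \<open>integrable M F\<close> \<open>integrable M G\<close> F G by (auto cong: Bochner_Integration.integrable_cong)
  note fg = indep_var_lebesgue_integral[OF indep_fg this] indep_var_integrable[OF indep_fg this]
  show "expectation (\<lambda>\<omega>. F \<omega> * G \<omega>) = expectation F * expectation G" "integrable M (\<lambda>\<omega>. F \<omega> * G \<omega>)"
    using fg F G by (auto cong: Bochner_Integration.integrable_cong Bochner_Integration.integral_cong)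
qed

lemma indep_vars_X: "indep_vars (\<lambda>_. borel) X {1..}"
  using indep_vars_reindex[OF indep, of Inl "{1..}"] by simp

lemma indep_vars_S: "indep_vars (\<lambda>_. borel) S {1..}"
  using indep_vars_reindex[OF indep, of Inr "{1..}"] by simp

lemma expectation_X_eq:
  fixes h :: "real \<Rightarrow> real"
  assumes "1 \<le> n" and [measurable]: "h \<in> borel_measurable borel"
  shows "expectation (\<lambda>\<omega>. h (X n \<omega>)) = expectation (\<lambda>\<omega>. h (X 1 \<omega>))"
proof -
  have "expectation (\<lambda>\<omega>. h (X n \<omega>)) = integral\<^sup>L (distr M borel (X n)) h"
    using assms by (simp add: integral_distr)
  also have "distr M borel (X n) = distr M borel (X 1)" using X_distr assms(1) by blast
  also have "integral\<^sup>L (distr M borel (X 1)) h = expectation (\<lambda>\<omega>. h (X 1 \<omega>))"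
    by (simp add: integral_distr)
  finally show ?thesis .
qed

text \<open>The paper's \<open>\<Phi>(c)\<close> is \<open>lam * mean_surplus c - c\<close>.\<close>

definition mean_surplus :: "real \<Rightarrow> real" where
  "mean_surplus c = expectation (\<lambda>\<omega>. max (r (X 1 \<omega>) - c * X 1 \<omega>) 0)"

lemma integrable_surplus_at: "1 \<le> n \<Longrightarrow> integrable M (\<lambda>\<omega>. max (r (X n \<omega>) - c * X n \<omega>) 0)"
proof (rule integrable_real_bounded[where B="D - E + \<bar>c\<bar> * C"])
  fix \<omega> assume "1 \<le> n" "\<omega> \<in> space M"
  then have "\<bar>r (X n \<omega>)\<bar> \<le> D - E" "\<bar>c * X n \<omega>\<bar> \<le> \<bar>c\<bar> * C"
    using r_X_range[of n \<omega>] X_nonneg[of n \<omega>] X_le_C[of n \<omega>] D_nonneg E_nonpos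
    by (auto simp: abs_mult intro: mult_left_mono)
  then show "\<bar>max (r (X n \<omega>) - c * X n \<omega>) 0\<bar> \<le> D - E + \<bar>c\<bar> * C" by linarith
qed simp

lemma antimono_mean_surplus: "antimono_on {0..} (\<lambda>c. lam * mean_surplus c)"
proof (rule monotone_onI)
  fix c d :: real assume "c \<le> d"
  have "mean_surplus d \<le> mean_surplus c"
    unfolding mean_surplus_def
  proof (rule integral_mono[OF integrable_surplus_at integrable_surplus_at])
    fix \<omega> assume "\<omega> \<in> space M"
    then have "c * X 1 \<omega> \<le> d * X 1 \<omega>" using X_nonneg[of 1 \<omega>] \<open>c \<le> d\<close> by (simp add: mult_right_mono)
    then show "max (r (X 1 \<omega>) - d * X 1 \<omega>) 0 \<le> max (r (X 1 \<omega>) - c * X 1 \<omega>) 0" by linarith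
  qed auto
  then show "lam * mean_surplus d \<le> lam * mean_surplus c" using lam_pos by simp
qed

lemma lipschitz_mean_surplus: "C-lipschitz_on {0..} mean_surplus"
proof (rule lipschitz_onI)
  fix c d :: real
  have "\<bar>mean_surplus c - mean_surplus d\<bar>
      = \<bar>expectation (\<lambda>\<omega>. max (r (X 1 \<omega>) - c * X 1 \<omega>) 0 - max (r (X 1 \<omega>) - d * X 1 \<omega>) 0)\<bar>"
    unfolding mean_surplus_def using integrable_surplus_at by simp
  also have "\<dots> \<le> expectation (\<lambda>\<omega>. C * \<bar>c - d\<bar>)"
  proof (rule order.trans[OF integral_abs_bound integral_mono])
    fix \<omega> assume "\<omega> \<in> space M"
    then have "\<bar>c * X 1 \<omega> - d * X 1 \<omega>\<bar> = \<bar>c - d\<bar> * X 1 \<omega>"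
      using X_nonneg[of 1 \<omega>] by (simp add: abs_mult left_diff_distrib[symmetric])
    also have "\<dots> \<le> C * \<bar>c - d\<bar>"
      using mult_left_mono[OF X_le_C[of 1 \<omega>] abs_ge_zero[of "c - d"]] \<open>\<omega> \<in> space M\<close>
      by (simp add: mult.commute)
    finally show "\<bar>max (r (X 1 \<omega>) - c * X 1 \<omega>) 0 - max (r (X 1 \<omega>) - d * X 1 \<omega>) 0\<bar> \<le> C * \<bar>c - d\<bar>"
      by linarith
  qed (use integrable_surplus_at in auto)
  finally show "dist (mean_surplus c) (mean_surplus d) \<le> C * dist c d"
    by (simp add: dist_real_def prob_space)
qed (use C_pos in simp)

abbreviation cstar :: real where
  "cstar \<equiv> c_star M lam r (X 1)"

lemma cstar_fixpoint: "0 \<le> cstar \<and> lam * mean_surplus cstar - cstar = 0"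
proof -
  have "continuous_on {0..} (\<lambda>c. lam * mean_surplus c)"
    using lipschitz_on_continuous_on[OF lipschitz_mean_surplus] by (intro continuous_intros)
  moreover have "0 \<le> lam * mean_surplus 0"
    unfolding mean_surplus_def using lam_pos by (intro mult_nonneg_nonneg integral_nonneg_AE) auto
  ultimately have "\<exists>!c. 0 \<le> c \<and> lam * mean_surplus c - c = 0"
    by (rule antimono_fixpoint_ex1[OF antimono_mean_surplus])
  then show ?thesis unfolding c_star_def mean_surplus_def[symmetric] by (rule theI')
qed

definition mu :: real where
  "mu = mean_surplus cstar"

lemma cstar_eq: "cstar = lam * mu" and cstar_nonneg: "0 \<le> cstar"
  using cstar_fixpoint unfolding mu_def by auto

definition surplus :: "nat \<Rightarrow> 'a \<Rightarrow> real" where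
  "surplus n \<omega> = max (r (X n \<omega>) - cstar * X n \<omega>) 0"

lemma measurable_surplus[measurable]: "1 \<le> n \<Longrightarrow> surplus n \<in> borel_measurable M"
  unfolding surplus_def[abs_def] by measurable

lemma surplus_range: "1 \<le> n \<Longrightarrow> \<omega> \<in> space M \<Longrightarrow> 0 \<le> surplus n \<omega> \<and> surplus n \<omega> \<le> D"
  using mult_nonneg_nonneg[OF cstar_nonneg X_nonneg[of n \<omega>]] r_X_range[of n \<omega>] D_nonneg
  unfolding surplus_def by auto

lemma integrable_surplus: "1 \<le> n \<Longrightarrow> integrable M (surplus n)"
  unfolding surplus_def by (rule integrable_surplus_at)

lemma expectation_surplus: "1 \<le> n \<Longrightarrow> expectation (surplus n) = mu"
  unfolding surplus_def mu_def mean_surplus_def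
  using expectation_X_eq[of n "\<lambda>x. max (r x - cstar * x) 0"] by simp

lemma expectation_abs_emp_surplus_dev:
  assumes "1 \<le> n"
  shows "expectation (\<lambda>\<omega>. \<bar>emp_surplus r X n \<omega> cstar - mu\<bar>) \<le> D / (2 * sqrt n)"
proof -
  have "indep_vars (\<lambda>_. borel) surplus {1..n}"
    using indep_vars_compose2[OF indep_vars_X, of "\<lambda>_ x. max (r x - cstar * x) 0" "\<lambda>_. borel"]
    by (auto simp: surplus_def[abs_def] intro: indep_vars_subset)
  from expectation_abs_sample_mean_dev_le[OF _ _ this, of D mu] assms
  show ?thesis using surplus_range expectation_surplus by (simp add: emp_surplus_def surplus_def)
qed

lemma emp_root_cstar_dist:
  assumes "1 \<le> n" "\<omega> \<in> space M"
  shows "\<bar>emp_root lam r X n \<omega> - cstar\<bar> \<le> lam * \<bar>emp_surplus r X n \<omega> cstar - mu\<bar>"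
proof -
  have "\<bar>emp_root lam r X n \<omega> - cstar\<bar> \<le> \<bar>lam * emp_surplus r X n \<omega> cstar - cstar\<bar>"
    using lam_pos X_nonneg assms(2) cstar_nonneg by (intro emp_root_dist) auto
  also have "lam * emp_surplus r X n \<omega> cstar - cstar = lam * (emp_surplus r X n \<omega> cstar - mu)"
    by (simp only: cstar_eq right_diff_distrib)
  also have "\<bar>\<dots>\<bar> = lam * \<bar>emp_surplus r X n \<omega> cstar - mu\<bar>"
    using lam_pos by (simp add: abs_mult)
  finally show ?thesis .
qed

text \<open>The surplus given up at step \<open>n\<close> by deciding with the estimate \<open>c\<^sub>n\<close> instead of \<open>c\<^sup>*\<close>.\<close>

definition surplus_loss :: "nat \<Rightarrow> 'a \<Rightarrow> real" where
  "surplus_loss n \<omega> = surplus n \<omega> - (r (X n \<omega>) - cstar * X n \<omega>) * act n \<omega>"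

lemma surplus_loss_range:
  assumes "1 \<le> n" "\<omega> \<in> space M"
  shows "0 \<le> surplus_loss n \<omega> \<and> surplus_loss n \<omega> \<le> lam * C * \<bar>emp_surplus r X n \<omega> cstar - mu\<bar>"
proof -
  let ?c = "emp_root lam r X n \<omega>"
  have "\<bar>(?c - cstar) * X n \<omega>\<bar> = \<bar>?c - cstar\<bar> * X n \<omega>"
    using X_nonneg[OF assms] by (simp add: abs_mult)
  also have "\<dots> \<le> \<bar>?c - cstar\<bar> * C"
    using X_le_C[OF assms] by (simp add: mult_left_mono)
  also have "\<dots> \<le> lam * \<bar>emp_surplus r X n \<omega> cstar - mu\<bar> * C"
    using emp_root_cstar_dist[OF assms] C_pos by (simp add: mult_right_mono)
  finally have bound: "\<bar>(?c - cstar) * X n \<omega>\<bar> \<le> lam * C * \<bar>emp_surplus r X n \<omega> cstar - mu\<bar>"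
    by (simp add: mult_ac)
  then show ?thesis
    unfolding surplus_loss_def surplus_def alg_action_def
    by (cases "?c * X n \<omega> \<le> r (X n \<omega>)") (auto simp: left_diff_distrib)
qed

lemma measurable_act[measurable]: "1 \<le> n \<Longrightarrow> act n \<in> borel_measurable M"
  using lam_pos X_nonneg by (intro borel_measurable_alg_action) auto

lemma measurable_elapsed[measurable]: "elapsed lam r X S n \<in> borel_measurable M"
  using lam_pos X_nonneg by (intro borel_measurable_elapsed) auto

lemma measurable_reached[measurable]: "Measurable.pred M (reached n)"
  using lam_pos X_nonneg by (intro measurable_step_reached) auto

lemma measurable_idle_within_S[measurable]: "Measurable.pred M (idle_within S T n)"
  by (intro measurable_idle_within) auto

lemma measurable_idle_time[measurable]: "idle_time S n \<in> borel_measurable M"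
  unfolding idle_time_def[abs_def] by (rule borel_measurable_sum) auto

lemma reached_imp_idle_within: "\<omega> \<in> space M \<Longrightarrow> reached n \<omega> \<Longrightarrow> idle_within S T n \<omega>"
  using X_nonneg by (intro step_reached_imp_idle_within) auto

lemma integrable_S: "1 \<le> n \<Longrightarrow> integrable M (S n)"
  using erlang_ith_moment_integrable[OF lam_pos, of "S n" 0 1] S_exponential by simp

lemma expectation_S: "1 \<le> n \<Longrightarrow> expectation (S n) = 1 / lam"
  using exponential_distributed_expectation[OF lam_pos] S_exponential by simp

lemma AE_S_nonneg: "1 \<le> n \<Longrightarrow> AE \<omega> in M. 0 \<le> S n \<omega>"
proof -
  assume "1 \<le> n"
  with S_exponential have "distributed M lborel (S n) (exponential_density lam)" by blast
  moreover have "AE x in lborel. 0 < exponential_density lam x \<longrightarrow> 0 \<le> x"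
    by (rule AE_I2) (auto simp: exponential_density_def)
  ultimately show ?thesis using distributed_AE2[of lborel "S n" _ "\<lambda>x. 0 \<le> x"] by simp
qed

lemma prob_idle_time_le: "1 \<le> n \<Longrightarrow> prob {\<omega> \<in> space M. idle_time S n \<omega> \<le> T} = erlang_CDF (n - 1) lam T"
proof -
  assume "1 \<le> n"
  then have "distributed M lborel (\<lambda>\<omega>. \<Sum>i\<in>{1..n}. S i \<omega>) (erlang_density (card {1..n} - 1) lam)"
    using S_exponential indep_vars_subset[OF indep_vars_S]
    by (intro exponential_distributed_sum[OF _ _ lam_pos]) auto
  with \<open>1 \<le> n\<close> show ?thesis
    using erlang_distributed_le[OF _ lam_pos, of _ "n - 1" T] T_pos by (simp add: idle_time_def[abs_def])
qed

definition idle_within_prob :: "nat \<Rightarrow> real" where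
  "idle_within_prob n = prob {\<omega> \<in> space M. idle_within S T n \<omega>}"

lemma idle_within_prob_range: "0 \<le> idle_within_prob n \<and> idle_within_prob n \<le> 1"
  unfolding idle_within_prob_def by simp

lemma prob_reached_le: "prob {\<omega> \<in> space M. reached n \<omega>} \<le> idle_within_prob n"
  unfolding idle_within_prob_def using reached_imp_idle_within by (intro finite_measure_mono) auto

lemma idle_within_prob_le_erlang_CDF: "idle_within_prob (m + 2) \<le> erlang_CDF m lam T"
proof -
  have "idle_within_prob (m + 2) \<le> prob {\<omega> \<in> space M. idle_time S (m + 1) \<omega> \<le> T}"
    unfolding idle_within_prob_def by (rule finite_measure_mono) (auto simp: idle_within_def)
  then show ?thesis using prob_idle_time_le[of "m + 1"] by simp
qed

lemma summable_idle_within_prob: "summable idle_within_prob"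
proof -
  have "summable (\<lambda>m. idle_within_prob (m + 2))"
    using idle_within_prob_le_erlang_CDF idle_within_prob_range T_pos
    by (intro summable_comparison_test[OF _ summable_erlang_CDF[OF lam_pos]]) auto
  then show ?thesis using summable_iff_shift[of idle_within_prob 2] by simp
qed

lemma sum_idle_within_prob_le: "(\<Sum>m<N. idle_within_prob (m + 1)) \<le> lam * T + 1"
proof (cases N)
  case (Suc K)
  have "(\<Sum>m<N. idle_within_prob (m + 1)) = idle_within_prob 1 + (\<Sum>m<K. idle_within_prob (m + 2))"
    unfolding Suc by (subst sum.lessThan_Suc_shift) simp
  also have "\<dots> \<le> 1 + (\<Sum>m<K. erlang_CDF m lam T)"
    using idle_within_prob_range idle_within_prob_le_erlang_CDF by (intro add_mono sum_mono) auto
  also have "\<dots> \<le> 1 + lam * T"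
    using sum_erlang_CDF_le[OF lam_pos] T_pos by simp
  finally show ?thesis by simp
qed (use lam_pos T_pos in simp)

lemma AE_elapsed_exceeds: "AE \<omega> in M. \<exists>n\<ge>1. T < elapsed lam r X S n \<omega>"
proof (rule AE_I)
  let ?N = "{\<omega> \<in> space M. \<forall>n\<ge>1. idle_time S n \<omega> \<le> T}"
  show "{\<omega> \<in> space M. \<not> (\<exists>n\<ge>1. T < elapsed lam r X S n \<omega>)} \<subseteq> ?N"
  proof safe
    fix \<omega> and n :: nat assume "\<omega> \<in> space M" "\<not> (\<exists>n\<ge>1. T < elapsed lam r X S n \<omega>)" "1 \<le> n"
    moreover from this have "idle_time S n \<omega> \<le> elapsed lam r X S n \<omega>"
      using X_nonneg by (intro idle_time_le_elapsed) auto
    ultimately show "idle_time S n \<omega> \<le> T" by force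
  qed
  have "prob ?N \<le> erlang_CDF m lam T" for m
  proof -
    have "prob ?N \<le> prob {\<omega> \<in> space M. idle_time S (m + 1) \<omega> \<le> T}"
      by (rule finite_measure_mono) auto
    then show ?thesis using prob_idle_time_le[of "m + 1"] by simp
  qed
  moreover have "(\<lambda>m. erlang_CDF m lam T) \<longlonglongrightarrow> 0"
    using summable_erlang_CDF[OF lam_pos] T_pos by (intro summable_LIMSEQ_zero) simp
  ultimately have "prob ?N \<le> 0" by (intro LIMSEQ_le_const) auto
  then show "emeasure M ?N = 0" by (simp add: emeasure_eq_measure measure_nonneg antisym)
qed measurable

text \<open>Whether step \<open>n\<close> is reached depends only on the data of the earlier steps.\<close>

lemma
  fixes g :: "(nat + nat \<Rightarrow> real) \<Rightarrow> real" and G :: "'a \<Rightarrow> real"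
  assumes "1 \<le> n" "B \<subseteq> indices" "B \<inter> (Inl ` {1..<n} \<union> Inr ` {1..<n}) = {}"
    and "g \<in> borel_measurable (PiM B (\<lambda>_. borel))" "\<And>\<omega>. \<omega> \<in> space M \<Longrightarrow> G \<omega> = g (coords B \<omega>)"
    and "integrable M G"
  shows expectation_reached_mult:
      "expectation (\<lambda>\<omega>. of_bool (reached n \<omega>) * G \<omega>) = prob {\<omega> \<in> space M. reached n \<omega>} * expectation G"
    and integrable_reached_mult: "integrable M (\<lambda>\<omega>. of_bool (reached n \<omega>) * G \<omega>)"
proof -
  let ?A = "Inl ` {1..<n} \<union> Inr ` {1..<n}"
  have "Measurable.pred (PiM ?A (\<lambda>_. borel)) (step_reached lam r coord_X coord_S T n)"
    using lam_pos by (intro measurable_step_reached_coords) auto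
  then have "(\<lambda>v. of_bool (step_reached lam r coord_X coord_S T n v)) \<in> borel_measurable (PiM ?A (\<lambda>_. borel))"
    by measurable
  note indep_mult = expectation_mult_coords[OF _ assms(2) _ this assms(4) _ assms(5) _ assms(6)]
    integrable_mult_coords[OF _ assms(2) _ this assms(4) _ assms(5) _ assms(6)]
  have "?A \<subseteq> indices" "?A \<inter> B = {}" using assms(3) by auto
  with indep_mult step_reached_coords[of n ?A] integrable_of_bool[OF measurable_reached]
  show "expectation (\<lambda>\<omega>. of_bool (reached n \<omega>) * G \<omega>) = prob {\<omega> \<in> space M. reached n \<omega>} * expectation G"
    "integrable M (\<lambda>\<omega>. of_bool (reached n \<omega>) * G \<omega>)"
    by (simp_all add: expectation_of_bool)
qed

lemma
  assumes "1 \<le> n"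
  shows expectation_reached_S:
      "expectation (\<lambda>\<omega>. of_bool (reached n \<omega>) * S n \<omega>) = prob {\<omega> \<in> space M. reached n \<omega>} / lam"
    and integrable_reached_S: "integrable M (\<lambda>\<omega>. of_bool (reached n \<omega>) * S n \<omega>)"
proof -
  have B: "{Inr n} \<subseteq> indices" "{Inr n} \<inter> (Inl ` {1..<n} \<union> Inr ` {1..<n}) = {}" using assms by auto
  have "S n \<omega> = coord_S n (coords {Inr n} \<omega>)" for \<omega> by (simp add: coord_S_coords)
  note reached_mult = expectation_reached_mult[OF assms B _ this integrable_S[OF assms]]
    integrable_reached_mult[OF assms B _ this integrable_S[OF assms]]
  show "expectation (\<lambda>\<omega>. of_bool (reached n \<omega>) * S n \<omega>) = prob {\<omega> \<in> space M. reached n \<omega>} / lam"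
    "integrable M (\<lambda>\<omega>. of_bool (reached n \<omega>) * S n \<omega>)"
    using reached_mult expectation_S[OF assms] by simp_all
qed

lemma
  assumes "1 \<le> n"
  shows expectation_reached_surplus:
      "expectation (\<lambda>\<omega>. of_bool (reached n \<omega>) * surplus n \<omega>) = prob {\<omega> \<in> space M. reached n \<omega>} * mu"
    and integrable_reached_surplus: "integrable M (\<lambda>\<omega>. of_bool (reached n \<omega>) * surplus n \<omega>)"
proof -
  have B: "{Inl n} \<subseteq> indices" "{Inl n} \<inter> (Inl ` {1..<n} \<union> Inr ` {1..<n}) = {}" using assms by auto
  let ?g = "\<lambda>v. max (r (coord_X n v) - cstar * coord_X n v) 0"
  have "?g \<in> borel_measurable (PiM {Inl n} (\<lambda>_. borel))" by measurable
  moreover have "surplus n \<omega> = ?g (coords {Inl n} \<omega>)" if "\<omega> \<in> space M" for \<omega>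
    using assms that by (simp add: coord_X_coords surplus_def)
  ultimately have g: "?g \<in> borel_measurable (PiM {Inl n} (\<lambda>_. borel))"
    and G: "\<And>\<omega>. \<omega> \<in> space M \<Longrightarrow> surplus n \<omega> = ?g (coords {Inl n} \<omega>)" .
  note reached_mult = expectation_reached_mult[OF assms B g G integrable_surplus[OF assms]]
    integrable_reached_mult[OF assms B g G integrable_surplus[OF assms]]
  show "expectation (\<lambda>\<omega>. of_bool (reached n \<omega>) * surplus n \<omega>) = prob {\<omega> \<in> space M. reached n \<omega>} * mu"
    "integrable M (\<lambda>\<omega>. of_bool (reached n \<omega>) * surplus n \<omega>)"
    using reached_mult expectation_surplus[OF assms] by simp_all
qed

lemma emp_surplus_cstar_range:
  assumes "\<omega> \<in> space M"
  shows "0 \<le> emp_surplus r X n \<omega> cstar \<and> emp_surplus r X n \<omega> cstar \<le> D"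
proof -
  have "emp_surplus r X n \<omega> cstar = (\<Sum>i=1..n. surplus i \<omega>) / n"
    unfolding emp_surplus_def surplus_def by simp
  moreover have "0 \<le> (\<Sum>i=1..n. surplus i \<omega>)" "(\<Sum>i=1..n. surplus i \<omega>) \<le> n * D"
    using surplus_range assms sum_mono[of "{1..n}" "\<lambda>i. surplus i \<omega>" "\<lambda>_. D"] by (auto intro: sum_nonneg)
  ultimately show ?thesis
    using D_nonneg by (cases "n = 0") (auto simp: pos_divide_le_eq mult.commute)
qed

lemma expectation_emp_surplus_dev_idle_within:
  assumes "1 \<le> n"
  shows "expectation (\<lambda>\<omega>. \<bar>emp_surplus r X n \<omega> cstar - mu\<bar> * of_bool (idle_within S T n \<omega>))
    = expectation (\<lambda>\<omega>. \<bar>emp_surplus r X n \<omega> cstar - mu\<bar>) * idle_within_prob n"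
proof -
  let ?A = "Inl ` {1..n}" and ?B = "Inr ` {1..<n}"
  have "(\<lambda>v. emp_surplus r coord_X n v cstar) \<in> borel_measurable (PiM ?A (\<lambda>_. borel))"
    by (intro borel_measurable_emp_surplus) auto
  then have f: "(\<lambda>v. \<bar>emp_surplus r coord_X n v cstar - mu\<bar>) \<in> borel_measurable (PiM ?A (\<lambda>_. borel))"
    by measurable
  have "Measurable.pred (PiM ?B (\<lambda>_. borel)) (idle_within coord_S T n)"
    by (intro measurable_idle_within_coords) auto
  then have g: "(\<lambda>v. of_bool (idle_within coord_S T n v)) \<in> borel_measurable (PiM ?B (\<lambda>_. borel))"
    by measurable
  have dev_int: "integrable M (\<lambda>\<omega>. \<bar>emp_surplus r X n \<omega> cstar - mu\<bar>)"
  proof (rule integrable_real_bounded[where B="D + \<bar>mu\<bar>"])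
    show "(\<lambda>\<omega>. \<bar>emp_surplus r X n \<omega> cstar - mu\<bar>) \<in> borel_measurable M"
      using borel_measurable_emp_surplus[of r n X M cstar] by simp
    fix \<omega> assume "\<omega> \<in> space M"
    from emp_surplus_cstar_range[OF this, of n] show "\<bar>\<bar>emp_surplus r X n \<omega> cstar - mu\<bar>\<bar> \<le> D + \<bar>mu\<bar>" by linarith
  qed
  have F: "\<bar>emp_surplus r X n \<omega> cstar - mu\<bar> = \<bar>emp_surplus r coord_X n (coords ?A \<omega>) cstar - mu\<bar>"
    if "\<omega> \<in> space M" for \<omega>
    using that by (subst emp_surplus_cong[of n _ \<omega> coord_X "coords ?A \<omega>"]) (auto simp: coord_X_coords)
  have G: "of_bool (idle_within S T n \<omega>) = of_bool (idle_within coord_S T n (coords ?B \<omega>))" for \<omega>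
    by (simp add: idle_within_coords)
  have AB: "?A \<subseteq> indices" "?B \<subseteq> indices" "?A \<inter> ?B = {}" by auto
  from expectation_mult_coords[OF AB f g F G dev_int integrable_of_bool[OF measurable_idle_within_S]]
  show ?thesis by (simp add: idle_within_prob_def expectation_of_bool)
qed

section \<open>Regret decomposition\<close>

lemma
  fixes F :: "nat \<Rightarrow> 'a \<Rightarrow> real" and K :: real
  assumes F_int: "\<And>n. integrable M (F n)"
    and F_zero: "\<And>n \<omega>. \<omega> \<in> space M \<Longrightarrow> \<not> (1 \<le> n \<and> reached n \<omega>) \<Longrightarrow> F n \<omega> = 0"
    and F_bound: "\<And>n. expectation (\<lambda>\<omega>. \<bar>F n \<omega>\<bar>) \<le> K * idle_within_prob n"
  shows integrable_suminf_reached: "integrable M (\<lambda>\<omega>. \<Sum>n. F n \<omega>)"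
    and expectation_suminf_reached: "expectation (\<lambda>\<omega>. \<Sum>n. F n \<omega>) = (\<Sum>n. expectation (F n))"
    and summable_expectation_reached: "summable (\<lambda>n. expectation (F n))"
proof -
  have "AE \<omega> in M. summable (\<lambda>n. norm (F n \<omega>))"
    using AE_elapsed_exceeds
  proof (rule AE_mp, intro AE_I2 impI)
    fix \<omega> assume "\<omega> \<in> space M" and exceeds: "\<exists>n\<ge>1. T < elapsed lam r X S n \<omega>"
    show "summable (\<lambda>n. norm (F n \<omega>))"
    proof (rule summable_finite[of "{1..alg_theta lam r X S T \<omega>}"])
      fix n assume "n \<notin> {1..alg_theta lam r X S T \<omega>}"
      then show "norm (F n \<omega>) = 0"
        using step_reached_iff_le_alg_theta[OF exceeds] F_zero \<open>\<omega> \<in> space M\<close> by auto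
    qed simp
  qed
  moreover have "summable (\<lambda>n. expectation (\<lambda>\<omega>. norm (F n \<omega>)))"
  proof (rule summable_comparison_test[OF _ summable_mult[OF summable_idle_within_prob, of K]])
    show "\<exists>N. \<forall>n\<ge>N. norm (expectation (\<lambda>\<omega>. norm (F n \<omega>))) \<le> K * idle_within_prob n"
      using F_bound by (auto simp: integral_nonneg_AE)
  qed
  ultimately show "integrable M (\<lambda>\<omega>. \<Sum>n. F n \<omega>)"
    "expectation (\<lambda>\<omega>. \<Sum>n. F n \<omega>) = (\<Sum>n. expectation (F n))"
    "summable (\<lambda>n. expectation (F n))"
    using integrable_suminf[OF F_int] integral_suminf[OF F_int] summable_integral[OF F_int] by auto
qed

definition reward_term :: "nat \<Rightarrow> 'a \<Rightarrow> real" where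
  "reward_term n \<omega> = of_bool (1 \<le> n \<and> reached n \<omega>) * (r (X n \<omega>) * act n \<omega>)"

text \<open>\<open>c\<^sup>*\<close> times the time spent in step \<open>n\<close>, minus the reward earned in it; since the
  elapsed time at \<open>\<theta>\<close> exceeds \<open>T\<close>, these terms dominate \<open>c\<^sup>* T\<close> minus the total reward.\<close>

definition regret_term :: "nat \<Rightarrow> 'a \<Rightarrow> real" where
  "regret_term n \<omega> = of_bool (1 \<le> n \<and> reached n \<omega>) *
     (cstar * (S n \<omega> + X n \<omega> * act n \<omega>) - r (X n \<omega>) * act n \<omega>)"

lemma
  assumes "\<exists>n\<ge>1. T < elapsed lam r X S n \<omega>"
  shows alg_reward_eq_suminf: "alg_reward lam r X S T \<omega> = (\<Sum>n. reward_term n \<omega>)"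
    and regret_le_suminf: "cstar * T - alg_reward lam r X S T \<omega> \<le> (\<Sum>n. regret_term n \<omega>)"
proof -
  let ?\<theta> = "alg_theta lam r X S T \<omega>"
  note reached_iff = step_reached_iff_le_alg_theta[OF assms]
  have "(\<Sum>n. reward_term n \<omega>) = (\<Sum>n\<in>{1..?\<theta>}. reward_term n \<omega>)"
    using reached_iff by (intro suminf_finite) (auto simp: reward_term_def)
  also have "\<dots> = (\<Sum>n=1..?\<theta>. r (X n \<omega>) * act n \<omega>)"
    using reached_iff by (intro sum.cong) (auto simp: reward_term_def)
  finally have reward: "(\<Sum>n. reward_term n \<omega>) = (\<Sum>n=1..?\<theta>. r (X n \<omega>) * act n \<omega>)" .
  have "(\<Sum>n. regret_term n \<omega>) = (\<Sum>n\<in>{1..?\<theta>}. regret_term n \<omega>)"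
    using reached_iff by (intro suminf_finite) (auto simp: regret_term_def)
  also have "\<dots> = (\<Sum>n=1..?\<theta>. cstar * (S n \<omega> + X n \<omega> * act n \<omega>) - r (X n \<omega>) * act n \<omega>)"
    using reached_iff by (intro sum.cong) (auto simp: regret_term_def)
  also have "\<dots> = cstar * elapsed lam r X S ?\<theta> \<omega> - (\<Sum>n=1..?\<theta>. r (X n \<omega>) * act n \<omega>)"
    by (simp add: elapsed_def sum_subtractf sum_distrib_left)
  finally have regret: "(\<Sum>n. regret_term n \<omega>) = cstar * elapsed lam r X S ?\<theta> \<omega> - (\<Sum>n. reward_term n \<omega>)"
    by (simp add: reward)
  show "alg_reward lam r X S T \<omega> = (\<Sum>n. reward_term n \<omega>)"
    by (simp add: reward alg_reward_def)
  have "cstar * T \<le> cstar * elapsed lam r X S ?\<theta> \<omega>"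
    using elapsed_alg_theta_gt[OF assms] cstar_nonneg by (intro mult_left_mono) auto
  then show "cstar * T - alg_reward lam r X S T \<omega> \<le> (\<Sum>n. regret_term n \<omega>)"
    by (simp add: regret alg_reward_def reward)
qed

lemma
  shows summable_idle_within_prob_divide_sqrt: "summable (\<lambda>n. idle_within_prob n / sqrt n)"
    and suminf_idle_within_prob_divide_sqrt_le: "(\<Sum>n. idle_within_prob n / sqrt n) \<le> 2 * sqrt (lam * T + 1)"
proof -
  have p: "0 \<le> idle_within_prob (m + 1) \<and> idle_within_prob (m + 1) \<le> 1" for m using idle_within_prob_range .
  have "0 \<le> lam * T + 1" using lam_pos T_pos by simp
  note shifted = summable_divide_sqrt[OF p sum_idle_within_prob_le this]
    suminf_divide_sqrt_le[OF p sum_idle_within_prob_le this]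
  have "summable (\<lambda>m. idle_within_prob (Suc m) / sqrt (Suc m))" using shifted(1) by (simp add: add.commute)
  then show summable: "summable (\<lambda>n. idle_within_prob n / sqrt n)" by (rule summable_Suc_iff[THEN iffD1])
  have "(\<Sum>n. idle_within_prob n / sqrt n) = (\<Sum>m. idle_within_prob (Suc m) / sqrt (Suc m))"
    using suminf_split_head[OF summable] by simp
  also have "\<dots> \<le> 2 * sqrt (lam * T + 1)" using shifted(2) by (simp add: add.commute)
  finally show "(\<Sum>n. idle_within_prob n / sqrt n) \<le> 2 * sqrt (lam * T + 1)" .
qed

lemma r_act_abs_le: "1 \<le> n \<Longrightarrow> \<omega> \<in> space M \<Longrightarrow> \<bar>r (X n \<omega>) * act n \<omega>\<bar> \<le> D - E"
  using r_X_range[of n \<omega>] alg_action_cases[of lam r X n \<omega>] D_nonneg E_nonpos by (auto simp: abs_le_iff)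

lemma measurable_reward_term[measurable]: "reward_term n \<in> borel_measurable M"
  by (cases "n = 0") (simp_all add: reward_term_def[abs_def])

lemma integrable_reward_term: "integrable M (reward_term n)"
  by (rule integrable_real_bounded[where B="D - E"])
    (use r_act_abs_le D_nonneg E_nonpos in \<open>auto simp: reward_term_def\<close>)

lemma expectation_abs_reward_term_le: "expectation (\<lambda>\<omega>. \<bar>reward_term n \<omega>\<bar>) \<le> (D - E) * idle_within_prob n"
proof -
  have "expectation (\<lambda>\<omega>. \<bar>reward_term n \<omega>\<bar>) \<le> expectation (\<lambda>\<omega>. (D - E) * of_bool (reached n \<omega>))"
    using integrable_of_bool[OF measurable_reached] r_act_abs_le D_nonneg E_nonpos
    by (intro integral_mono integrable_abs integrable_reward_term) (auto simp: reward_term_def)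
  also have "\<dots> \<le> (D - E) * idle_within_prob n"
    using prob_reached_le D_nonneg E_nonpos by (simp add: expectation_of_bool mult_left_mono)
  finally show ?thesis .
qed

lemma measurable_surplus_loss[measurable]: "1 \<le> n \<Longrightarrow> surplus_loss n \<in> borel_measurable M"
  unfolding surplus_loss_def[abs_def] by measurable

lemma integrable_reached_surplus_loss:
  assumes "1 \<le> n"
  shows "integrable M (\<lambda>\<omega>. of_bool (reached n \<omega>) * surplus_loss n \<omega>)"
proof (rule integrable_real_bounded[where B="lam * C * (D + \<bar>mu\<bar>)"])
  show "(\<lambda>\<omega>. of_bool (reached n \<omega>) * surplus_loss n \<omega>) \<in> borel_measurable M"
    using assms by measurable
  fix \<omega> assume "\<omega> \<in> space M"
  then have "\<bar>emp_surplus r X n \<omega> cstar - mu\<bar> \<le> D + \<bar>mu\<bar>"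
    using emp_surplus_cstar_range[of \<omega> n] by linarith
  then have "lam * C * \<bar>emp_surplus r X n \<omega> cstar - mu\<bar> \<le> lam * C * (D + \<bar>mu\<bar>)"
    using lam_pos C_pos by (intro mult_left_mono) auto
  moreover have "0 \<le> lam * C * (D + \<bar>mu\<bar>)" using lam_pos C_pos D_nonneg by simp
  moreover note surplus_loss_range[OF assms \<open>\<omega> \<in> space M\<close>]
  ultimately show "\<bar>of_bool (reached n \<omega>) * surplus_loss n \<omega>\<bar> \<le> lam * C * (D + \<bar>mu\<bar>)" by auto
qed

lemma expectation_reached_surplus_loss_le:
  assumes "1 \<le> n"
  shows "expectation (\<lambda>\<omega>. of_bool (reached n \<omega>) * surplus_loss n \<omega>) \<le> lam * C * D / 2 * (idle_within_prob n / sqrt n)"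
proof -
  let ?dev = "\<lambda>\<omega>. \<bar>emp_surplus r X n \<omega> cstar - mu\<bar>"
  have "expectation (\<lambda>\<omega>. of_bool (reached n \<omega>) * surplus_loss n \<omega>)
      \<le> expectation (\<lambda>\<omega>. lam * C * (?dev \<omega> * of_bool (idle_within S T n \<omega>)))"
  proof (rule integral_mono[OF integrable_reached_surplus_loss[OF assms]])
    show "integrable M (\<lambda>\<omega>. lam * C * (?dev \<omega> * of_bool (idle_within S T n \<omega>)))"
    proof (intro integrable_mult_right integrable_real_bounded[where B="D + \<bar>mu\<bar>"])
      fix \<omega> assume "\<omega> \<in> space M"
      with emp_surplus_cstar_range[of \<omega> n]
      show "\<bar>?dev \<omega> * of_bool (idle_within S T n \<omega>)\<bar> \<le> D + \<bar>mu\<bar>" by auto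
    qed (use borel_measurable_emp_surplus[of r n X M cstar] in simp)
    fix \<omega> assume "\<omega> \<in> space M"
    then show "of_bool (reached n \<omega>) * surplus_loss n \<omega> \<le> lam * C * (?dev \<omega> * of_bool (idle_within S T n \<omega>))"
      using surplus_loss_range[OF assms] reached_imp_idle_within lam_pos C_pos by auto
  qed
  also have "\<dots> = lam * C * (expectation ?dev * idle_within_prob n)"
    using expectation_emp_surplus_dev_idle_within[OF assms] by simp
  also have "\<dots> \<le> lam * C * (D / (2 * sqrt n) * idle_within_prob n)"
    using expectation_abs_emp_surplus_dev[OF assms] idle_within_prob_range[of n] lam_pos C_pos
    by (intro mult_left_mono mult_right_mono) auto
  finally show ?thesis by (simp add: field_simps)
qed

lemma regret_term_decomp:
  "1 \<le> n \<Longrightarrow> regret_term n = (\<lambda>\<omega>. cstar * (of_bool (reached n \<omega>) * S n \<omega>)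
     - of_bool (reached n \<omega>) * surplus n \<omega> + of_bool (reached n \<omega>) * surplus_loss n \<omega>)"
  by (auto simp: fun_eq_iff regret_term_def surplus_loss_def algebra_simps)

lemma integrable_regret_term: "integrable M (regret_term n)"
proof (cases "n = 0")
  case False
  then have "1 \<le> n" by simp
  with integrable_reached_S integrable_reached_surplus integrable_reached_surplus_loss
  show ?thesis by (simp add: regret_term_decomp)
qed (simp add: regret_term_def[abs_def])

text \<open>Both \<open>S n\<close> and \<open>surplus n\<close> are independent of reaching step \<open>n\<close>, and
  \<open>c\<^sup>* E[S n] = c\<^sup>* / lam = mu = E[surplus n]\<close>: only the estimation loss survives.\<close>

lemma expectation_regret_term:
  assumes "1 \<le> n"
  shows "expectation (regret_term n) = expectation (\<lambda>\<omega>. of_bool (reached n \<omega>) * surplus_loss n \<omega>)"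
  using assms integrable_reached_S[OF assms] integrable_reached_surplus[OF assms]
    integrable_reached_surplus_loss[OF assms] lam_pos
  by (simp add: regret_term_decomp expectation_reached_S expectation_reached_surplus cstar_eq[simplified])

lemma expectation_regret_term_le:
  "expectation (regret_term n) \<le> lam * C * D / 2 * (idle_within_prob n / sqrt n)"
proof (cases "n = 0")
  case False
  then show ?thesis using expectation_regret_term expectation_reached_surplus_loss_le by simp
qed (simp add: regret_term_def[abs_def])

lemma expectation_abs_regret_term_le:
  "expectation (\<lambda>\<omega>. \<bar>regret_term n \<omega>\<bar>) \<le> (cstar / lam + cstar * C + (D - E)) * idle_within_prob n"
proof (cases "n = 0")
  case False
  then have n: "1 \<le> n" by simp
  let ?K = "cstar * C + (D - E)"
  have "expectation (\<lambda>\<omega>. \<bar>regret_term n \<omega>\<bar>)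
      \<le> expectation (\<lambda>\<omega>. cstar * (of_bool (reached n \<omega>) * S n \<omega>) + ?K * of_bool (reached n \<omega>))"
  proof (rule integral_mono_AE)
    show "integrable M (\<lambda>\<omega>. \<bar>regret_term n \<omega>\<bar>)" using integrable_regret_term by simp
    show "integrable M (\<lambda>\<omega>. cstar * (of_bool (reached n \<omega>) * S n \<omega>) + ?K * of_bool (reached n \<omega>))"
      using integrable_reached_S[OF n] integrable_of_bool[OF measurable_reached] by simp
    show "AE \<omega> in M. \<bar>regret_term n \<omega>\<bar> \<le> cstar * (of_bool (reached n \<omega>) * S n \<omega>) + ?K * of_bool (reached n \<omega>)"
      using AE_S_nonneg[OF n]
    proof (rule AE_mp, intro AE_I2 impI)
      fix \<omega> assume "\<omega> \<in> space M" "0 \<le> S n \<omega>"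
      moreover have "\<bar>cstar * X n \<omega> * act n \<omega>\<bar> \<le> cstar * C"
      proof -
        have "0 \<le> cstar * X n \<omega>" "cstar * X n \<omega> \<le> cstar * C"
          using \<open>\<omega> \<in> space M\<close> cstar_nonneg X_nonneg[OF n] X_le_C[OF n] by (auto intro: mult_left_mono)
        then show ?thesis using alg_action_cases[of lam r X n \<omega>] by auto
      qed
      ultimately show "\<bar>regret_term n \<omega>\<bar> \<le> cstar * (of_bool (reached n \<omega>) * S n \<omega>) + ?K * of_bool (reached n \<omega>)"
        using n r_act_abs_le[OF n \<open>\<omega> \<in> space M\<close>] mult_nonneg_nonneg[OF cstar_nonneg \<open>0 \<le> S n \<omega>\<close>]
        unfolding regret_term_def by (auto simp: abs_le_iff algebra_simps)
    qed
  qed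
  also have "\<dots> = cstar * expectation (\<lambda>\<omega>. of_bool (reached n \<omega>) * S n \<omega>)
      + ?K * expectation (\<lambda>\<omega>. of_bool (reached n \<omega>))"
    using integrable_reached_S[OF n] integrable_of_bool[OF measurable_reached] by simp
  also have "\<dots> = (cstar / lam + ?K) * prob {\<omega> \<in> space M. reached n \<omega>}"
    by (simp add: expectation_reached_S[OF n] expectation_of_bool) (simp add: algebra_simps)
  also have "\<dots> \<le> (cstar / lam + ?K) * idle_within_prob n"
    using prob_reached_le cstar_nonneg lam_pos C_pos D_nonneg E_nonpos by (intro mult_left_mono) auto
  finally show ?thesis by (simp add: add.assoc)
qed (use idle_within_prob_range cstar_nonneg lam_pos C_pos D_nonneg E_nonpos in \<open>simp add: regret_term_def\<close>)

lemma measurable_alg_reward[measurable]: "alg_reward lam r X S T \<in> borel_measurable M"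
proof -
  have \<theta>: "alg_theta lam r X S T \<in> measurable M (count_space UNIV)"
    unfolding alg_theta_eq[abs_def] by measurable
  have partial_sums: "(\<lambda>\<omega>. \<Sum>n=1..k. r (X n \<omega>) * act n \<omega>) \<in> borel_measurable M" for k
    by (rule borel_measurable_sum) auto
  show ?thesis
    unfolding alg_reward_def[abs_def] by (rule measurable_compose_countable'[OF partial_sums \<theta>]) simp
qed

theorem regret_le: "cstar * T - expectation (alg_reward lam r X S T) \<le> lam * C * D * sqrt (lam * T + 1)"
proof -
  have reward_zero: "\<And>n \<omega>. \<omega> \<in> space M \<Longrightarrow> \<not> (1 \<le> n \<and> reached n \<omega>) \<Longrightarrow> reward_term n \<omega> = 0"
    and regret_zero: "\<And>n \<omega>. \<omega> \<in> space M \<Longrightarrow> \<not> (1 \<le> n \<and> reached n \<omega>) \<Longrightarrow> regret_term n \<omega> = 0"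
    by (simp_all add: reward_term_def regret_term_def)
  note reward_series = integrable_suminf_reached[OF integrable_reward_term reward_zero expectation_abs_reward_term_le]
  note regret_series = integrable_suminf_reached expectation_suminf_reached summable_expectation_reached
  note regret_series = regret_series[OF integrable_regret_term regret_zero expectation_abs_regret_term_le]
  have "AE \<omega> in M. (\<Sum>n. reward_term n \<omega>) = alg_reward lam r X S T \<omega>"
    using AE_elapsed_exceeds by eventually_elim (simp add: alg_reward_eq_suminf)
  from integrable_cong_AE_imp[OF reward_series measurable_alg_reward this]
  have reward_int: "integrable M (alg_reward lam r X S T)" .
  then have "cstar * T - expectation (alg_reward lam r X S T) = expectation (\<lambda>\<omega>. cstar * T - alg_reward lam r X S T \<omega>)"
    by (simp add: prob_space)
  also have "\<dots> \<le> expectation (\<lambda>\<omega>. \<Sum>n. regret_term n \<omega>)"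
  proof (rule integral_mono_AE)
    show "AE \<omega> in M. cstar * T - alg_reward lam r X S T \<omega> \<le> (\<Sum>n. regret_term n \<omega>)"
      using AE_elapsed_exceeds by eventually_elim (rule regret_le_suminf)
  qed (use reward_int regret_series(1) in simp_all)
  also have "\<dots> = (\<Sum>n. expectation (regret_term n))" by (rule regret_series(2))
  also have "\<dots> \<le> (\<Sum>n. lam * C * D / 2 * (idle_within_prob n / sqrt n))"
    using expectation_regret_term_le regret_series(3) summable_mult[OF summable_idle_within_prob_divide_sqrt]
    by (rule suminf_le)
  also have "\<dots> = lam * C * D / 2 * (\<Sum>n. idle_within_prob n / sqrt n)"
    by (rule suminf_mult[OF summable_idle_within_prob_divide_sqrt])
  also have "\<dots> \<le> lam * C * D / 2 * (2 * sqrt (lam * T + 1))"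
    using suminf_idle_within_prob_divide_sqrt_le lam_pos C_pos D_nonneg by (intro mult_left_mono) auto
  finally show ?thesis by simp
qed

end

theorem theorem3p2:
  fixes M :: "'a measure"
    and X S :: "nat \<Rightarrow> 'a \<Rightarrow> real"
    and r :: "real \<Rightarrow> real"
    and C E D lam T :: real
  assumes "prob_space M"
    and "C > 0" and "E \<le> 0" and "0 \<le> D" and "lam > 0" and "T > 0"
    and "r \<in> borel_measurable borel"
    and "\<forall>x\<in>{0..C}. E \<le> r x \<and> r x \<le> D"
    and "\<forall>n\<ge>1. \<forall>\<omega>\<in>space M. 0 \<le> X n \<omega> \<and> X n \<omega> \<le> C"
    and "prob_space.indep_vars M (\<lambda>_. borel)
           (\<lambda>i. case i of Inl n \<Rightarrow> X n | Inr n \<Rightarrow> S n) (Inl ` {1..} \<union> Inr ` {1..})"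
    and "\<forall>n\<ge>1. distr M borel (X n) = distr M borel (X 1)"
    and "\<forall>n\<ge>1. distributed M lborel (S n) (exponential_density lam)"
  shows "c_star M lam r (X 1) * T - (\<integral>\<omega>. alg_reward lam r X S T \<omega> \<partial>M)
           \<le> lam * (D - E) * C * sqrt (pi / 2) * sqrt (lam * T + 1)"
proof -
  interpret time_allocation M X S r C E D lam T
    unfolding time_allocation_def time_allocation_axioms_def using assms by (intro conjI) assumption+
  have "1 \<le> sqrt (pi / 2)" using pi_gt3 by simp
  then have "D * 1 \<le> (D - E) * sqrt (pi / 2)" using assms(3,4) by (intro mult_mono) auto
  then have "lam * C * sqrt (lam * T + 1) * D \<le> lam * C * sqrt (lam * T + 1) * ((D - E) * sqrt (pi / 2))"
    using assms(2,5,6) by (intro mult_left_mono) auto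
  then have "lam * C * D * sqrt (lam * T + 1) \<le> lam * (D - E) * C * sqrt (pi / 2) * sqrt (lam * T + 1)"
    by (simp add: mult_ac)
  with regret_le show ?thesis by (rule order.trans)
qed

end
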